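(* In a finite dynamic game as described in the context, suppose $K^i$ is unilaterally sufficient information for player $i$. Let $g$ be the strategy part of a sequential equilibrium $(g,Q)$. Then there exists a $K^i$-based strategy $\rho^i$ such that $(\rho^i,g^{-i})$ is the strategy part of a sequential equilibrium and $J^j(\rho^i,g^{-i})=J^j(g)$ for all $j\in\mathcal{I}$.
   Context: Game model: finite set of players $\mathcal{I}$, times $\mathcal{T}=\{1,\dots,T\}$. At time $t$ each player $i$ takes action $U_t^i\in\mathcal{U}_t^i$, obtains reward $R_t^i\in[-1,1]$ and learns new information $Z_t^i\in\mathcal{Z}_t^i$. There is a state $X_t\in\mathcal{X}_t$ with $(X_{t+1},Z_t,R_t)=f_t(X_t,U_t,W_t)$ for fixed functions $f_t$. Primitive random variables $(X_1,H_1)$ and $W_1,\dots,W_T$ are mutually independent with commonly known distributions. All sets are finite. Perfect recall: $H_t^i=(H_1^i,Z_{1:t-1}^i)\in\mathcal{H}_t^i$, and $U_t^i$ is a component of $Z_t^i$. Behavioral strategy $g_t^i:\mathcal{H}_t^i\to\Delta(\mathcal{U}_t^i)$; payoff $J^j(g)=\mathbb{E}^g[\sum_t R_t^j]$. A realization is admissible under $g$ if it has positive probability under $g$. Sequential equilibrium (SE): for a profile $g$ and functions $Q_t^i:\mathcal{H}_t^i\times\mathcal{U}_t^i\to\mathbb{R}$: $g$ is sequentially rational under $Q$ if $\mathrm{supp}(g_t^i(h_t^i))\subseteq\arg\max_u Q_t^i(h_t^i,u)$ for all $i,t,h_t^i$; $Q$ is fully consistent with $g$ if there is a sequence $(g^{(n)},Q^{(n)})\to(g,Q)$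 with each $g^{(n)}$ fully mixed and $Q_\tau^{(n),i}(h_\tau^i,u_\tau^i)=\mathbb{E}^{g^{(n)}}[\sum_{t=\tau}^T R_t^i\mid h_\tau^i,u_\tau^i]$ for all $i,\tau,h_\tau^i,u_\tau^i$; $(g,Q)$ is an SE if both hold; $g$ is then called the strategy part of the SE. Compression: $K_1^i=\iota_1^i(H_1^i)$, $K_t^i=\iota_t^i(K_{t-1}^i,Z_{t-1}^i)$ for fixed maps, finite value sets $\mathcal{K}_t^i$; $k_t^i$ is the compression of $h_t^i$; a $K^i$-based strategy has $\rho_t^i:\mathcal{K}_t^i\to\Delta(\mathcal{U}_t^i)$. Unilaterally sufficient information (USI): $K^i$ is USI for player $i$ if there exist $F_t^{i,g^i}:\mathcal{K}_t^i\to\Delta(\mathcal{H}_t^i)$ depending only on $g^i$ and $\Phi_t^{i,g^{-i}}:\mathcal{K}_t^i\to\Delta(\mathcal{X}_t\times\mathcal{H}_t^{-i})$ depending only on $g^{-i}$ with $\Pr^g(x_t,h_t\mid k_t^i)=F_t^{i,g^i}(h_t^i\mid k_t^i)\Phi_t^{i,g^{-i}}(x_t,h_t^{-i}\mid k_t^i)$ for all behavioral profiles $g$, all $t$, all $k_t^i$ admissible under $g$ (with $x_t,h_t^i,h_t^{-i}$ ranging independently; the left side is $0$ if they disagree on shared components). *)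

theory Defs
  imports "HOL-Probability.Probability"
begin

text \<open>All sets of the paper are modelled by finite types
 (players 'i, states 'x, actions 'u, observations 'z, noise 'w, initial
 private information 'h, compressed information 'k).  Only the action sets
 U_t^i are kept as explicit sets, since they constrain strategies.
 Times are 1..T.  A history of player i at time t is (H_1^i, [Z_1^i,...,Z_{t-1}^i]).\<close>

type_synonym ('h,'z) hist = "'h \<times> 'z list"

record ('i,'x,'u,'z,'w,'h) game =
  gm_T    :: nat
  gm_init :: "('x \<times> ('i \<Rightarrow> 'h)) pmf"
  gm_W    :: "nat \<Rightarrow> 'w pmf"
  gm_f    :: "nat \<Rightarrow> 'x \<Rightarrow> ('i \<Rightarrow> 'u) \<Rightarrow> 'w \<Rightarrow> 'x \<times> ('i \<Rightarrow> 'z) \<times> ('i \<Rightarrow> real)"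
                                                                  \<comment> \<open>(X_{t+1},Z_t,R_t) = f_t(X_t,U_t,W_t)\<close>
  gm_U    :: "nat \<Rightarrow> 'i \<Rightarrow> 'u set"
  gm_act  :: "nat \<Rightarrow> 'i \<Rightarrow> 'z \<Rightarrow> 'u"                               \<comment> \<open>U_t^i is a component of Z_t^i\<close>

definition wf_game :: "('i,'x,'u,'z,'w,'h,'m) game_scheme \<Rightarrow> bool" where
  "wf_game G \<longleftrightarrow>
     (\<forall>t\<in>{1..gm_T G}. \<forall>i. gm_U G t i \<noteq> {}) \<and>
     (\<forall>t\<in>{1..gm_T G}. \<forall>x u w. (\<forall>j. u j \<in> gm_U G t j) \<longrightarrow>
        (case gm_f G t x u w of (x', z, r) \<Rightarrow>
           (\<forall>j. gm_act G t j (z j) = u j \<and> -1 \<le> r j \<and> r j \<le> 1)))"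

type_synonym ('i,'h,'z,'u) profile = "'i \<Rightarrow> nat \<Rightarrow> ('h,'z) hist \<Rightarrow> 'u pmf"

text \<open>trace entry at time t: (X_t, (H_t^j)_j, (U_t^j)_j, (R_t^j)_j)\<close>
type_synonym ('i,'x,'u,'z,'h) entry = "'x \<times> ('i \<Rightarrow> ('h,'z) hist) \<times> ('i \<Rightarrow> 'u) \<times> ('i \<Rightarrow> real)"

primrec gen :: "('i::finite,'x,'u,'z,'w,'h,'m) game_scheme \<Rightarrow> ('i,'h,'z,'u) profile \<Rightarrow> nat \<Rightarrow> nat
                 \<Rightarrow> 'x \<Rightarrow> ('i \<Rightarrow> ('h,'z) hist) \<Rightarrow> ('i,'x,'u,'z,'h) entry list pmf" where
  "gen G g 0 t x hs = return_pmf []"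
| "gen G g (Suc n) t x hs =
     bind_pmf (Pi_pmf UNIV undefined (\<lambda>j. g j t (hs j))) (\<lambda>u.
     bind_pmf (gm_W G t) (\<lambda>w.
       (case gm_f G t x u w of (x', z, r) \<Rightarrow>
          map_pmf (\<lambda>rest. (x, hs, u, r) # rest)
            (gen G g n (Suc t) x' (\<lambda>j. (fst (hs j), snd (hs j) @ [z j]))))))"

definition run :: "('i::finite,'x,'u,'z,'w,'h,'m) game_scheme \<Rightarrow> ('i,'h,'z,'u) profile
                   \<Rightarrow> ('i,'x,'u,'z,'h) entry list pmf" where
  "run G g = bind_pmf (gm_init G) (\<lambda>(x, h1). gen G g (gm_T G) 1 x (\<lambda>j. (h1 j, [])))"

definition rvX :: "('i,'x,'u,'z,'h) entry list \<Rightarrow> nat \<Rightarrow> 'x" where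
  "rvX tr t = fst (tr ! (t - 1))"
definition rvH :: "('i,'x,'u,'z,'h) entry list \<Rightarrow> nat \<Rightarrow> 'i \<Rightarrow> ('h,'z) hist" where
  "rvH tr t = fst (snd (tr ! (t - 1)))"
definition rvU :: "('i,'x,'u,'z,'h) entry list \<Rightarrow> nat \<Rightarrow> 'i \<Rightarrow> 'u" where
  "rvU tr t = fst (snd (snd (tr ! (t - 1))))"
definition rvR :: "('i,'x,'u,'z,'h) entry list \<Rightarrow> nat \<Rightarrow> 'i \<Rightarrow> real" where
  "rvR tr t = snd (snd (snd (tr ! (t - 1))))"

definition Pr :: "('i::finite,'x,'u,'z,'w,'h,'m) game_scheme \<Rightarrow> ('i,'h,'z,'u) profile
                  \<Rightarrow> ('i,'x,'u,'z,'h) entry list set \<Rightarrow> real" where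
  "Pr G g A = measure_pmf.prob (run G g) A"

definition cond_Pr where
  "cond_Pr G g A B = Pr G g (A \<inter> B) / Pr G g B"

definition cond_E where
  "cond_E G g Y B = measure_pmf.expectation (run G g) (\<lambda>tr. indicator B tr * Y tr) / Pr G g B"

definition J where
  "J G g j = measure_pmf.expectation (run G g) (\<lambda>tr. \<Sum>t\<in>{1..gm_T G}. rvR tr t j)"

definition wf_hist :: "nat \<Rightarrow> ('h,'z) hist \<Rightarrow> bool" where
  "wf_hist t h \<longleftrightarrow> length (snd h) = t - 1"

definition valid_profile where
  "valid_profile G g \<longleftrightarrow>
     (\<forall>j. \<forall>t\<in>{1..gm_T G}. \<forall>h. wf_hist t h \<longrightarrow> set_pmf (g j t h) \<subseteq> gm_U G t j)"

definition fully_mixed where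
  "fully_mixed G g \<longleftrightarrow>
     (\<forall>j. \<forall>t\<in>{1..gm_T G}. \<forall>h. wf_hist t h \<longrightarrow> set_pmf (g j t h) = gm_U G t j)"

definition Q_of where
  "Q_of G g Q \<longleftrightarrow>
     (\<forall>j. \<forall>\<tau>\<in>{1..gm_T G}. \<forall>h u.
        Pr G g {tr. rvH tr \<tau> j = h \<and> rvU tr \<tau> j = u} > 0 \<longrightarrow>
        Q j \<tau> h u = cond_E G g (\<lambda>tr. \<Sum>t\<in>{\<tau>..gm_T G}. rvR tr t j)
                               {tr. rvH tr \<tau> j = h \<and> rvU tr \<tau> j = u})"

definition seq_rational where
  "seq_rational G g (Q :: 'i::finite \<Rightarrow> nat \<Rightarrow> ('h,'z) hist \<Rightarrow> 'u \<Rightarrow> real) \<longleftrightarrow>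
     (\<forall>j. \<forall>t\<in>{1..gm_T G}. \<forall>h. wf_hist t h \<longrightarrow>
        set_pmf (g j t h) \<subseteq> {u \<in> gm_U G t j. \<forall>u'\<in>gm_U G t j. Q j t h u' \<le> Q j t h u})"

definition fully_consistent where
  "fully_consistent G g (Q :: 'i::finite \<Rightarrow> nat \<Rightarrow> ('h,'z) hist \<Rightarrow> 'u \<Rightarrow> real) \<longleftrightarrow>
     (\<exists>gs Qs. (\<forall>n. fully_mixed G (gs n) \<and> Q_of G (gs n) (Qs n)) \<and>
        (\<forall>j. \<forall>t\<in>{1..gm_T G}. \<forall>h u. wf_hist t h \<longrightarrow>
           (\<lambda>n. pmf (gs n j t h) u) \<longlonglongrightarrow> pmf (g j t h) u \<and>
           (u \<in> gm_U G t j \<longrightarrow> (\<lambda>n. Qs n j t h u) \<longlonglongrightarrow> Q j t h u)))"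

definition is_SE where
  "is_SE G g Q \<longleftrightarrow> seq_rational G g Q \<and> fully_consistent G g Q"

text \<open>Compression: K_1 = iota1(H_1), K_t = iota_t(K_{t-1}, Z_{t-1}).\<close>
definition compress :: "('i \<Rightarrow> 'h \<Rightarrow> 'k) \<Rightarrow> (nat \<Rightarrow> 'i \<Rightarrow> 'k \<Rightarrow> 'z \<Rightarrow> 'k) \<Rightarrow> 'i
                        \<Rightarrow> ('h,'z) hist \<Rightarrow> 'k" where
  "compress \<iota>1 \<iota> j h =
     foldl (\<lambda>k (s, z). \<iota> s j k z) (\<iota>1 j (fst h)) (zip [2..<length (snd h) + 2] (snd h))"

definition Kbased where
  "Kbased \<iota>1 \<iota> j (\<rho> :: nat \<Rightarrow> 'k \<Rightarrow> 'u pmf) = (\<lambda>t h. \<rho> t (compress \<iota>1 \<iota> j h))"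

definition others :: "'i \<Rightarrow> ('i \<Rightarrow> 'a) \<Rightarrow> ('i \<Rightarrow> 'a)" where
  "others i f = f(i := undefined)"

text \<open>Unilaterally sufficient information.  F depends only on g^i (it is applied to g i),
 Phi only on g^{-i} (it is applied to others i g).\<close>
definition USI where
  "USI G (\<iota>1 :: 'i::finite \<Rightarrow> 'h \<Rightarrow> 'k) \<iota> i \<longleftrightarrow>
     (\<exists>(F :: (nat \<Rightarrow> ('h,'z) hist \<Rightarrow> 'u pmf) \<Rightarrow> nat \<Rightarrow> 'k \<Rightarrow> ('h,'z) hist pmf)
       (\<Phi> :: ('i,'h,'z,'u) profile \<Rightarrow> nat \<Rightarrow> 'k \<Rightarrow> ('x \<times> ('i \<Rightarrow> ('h,'z) hist)) pmf).
       \<forall>g. valid_profile G g \<longrightarrow>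
       (\<forall>t\<in>{1..gm_T G}. \<forall>k.
          Pr G g {tr. compress \<iota>1 \<iota> i (rvH tr t i) = k} > 0 \<longrightarrow>
          (\<forall>x hs. cond_Pr G g {tr. rvX tr t = x \<and> rvH tr t = hs}
                               {tr. compress \<iota>1 \<iota> i (rvH tr t i) = k}
                 = pmf (F (g i) t k) (hs i) * pmf (\<Phi> (others i g) t k) (x, others i hs))))"

end

theory Submission
  imports Defs
begin

text \<open>Take fully mixed profiles \<open>g\<^sup>n \<rightarrow> g\<close> witnessing the full consistency of \<open>(g, Q)\<close>, and
  replace player \<open>i\<close>'s strategy in \<open>g\<^sup>n\<close> by \<open>\<rho>\<^sup>n\<^sub>t(k)\<close>, the law of \<open>U\<^sub>t\<^sup>i\<close> given \<open>K\<^sub>t\<^sup>i = k\<close>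
  under \<open>g\<^sup>n\<close>; the result is again fully mixed.  By USI, \<open>H\<^sub>t\<^sup>i\<close> is conditionally independent
  of \<open>(X\<^sub>t, H\<^sub>t\<^sup>-\<^sup>i)\<close> given \<open>K\<^sub>t\<^sup>i\<close>, so the replacement does not change the law of
  \<open>(X\<^sub>t, H\<^sub>t\<^sup>-\<^sup>i, K\<^sub>t\<^sup>i, U\<^sub>t, R\<^sub>t)\<close>: payoffs and the conditional expectations of the other
  players are preserved.  For player \<open>i\<close> the same independence yields a Bellman recursion for
  the conditional reward-to-go whose one-step terms depend on \<open>h\<^sub>t\<^sup>i\<close> only through \<open>k\<^sub>t\<^sup>i\<close>.
  Along a subsequence with \<open>\<rho>\<^sup>n \<rightarrow> \<rho>\<close>, backward induction shows that the modified
  reward-to-go functions converge to \<open>Q\<close> at reachable histories and that \<open>Q\<^sub>t\<^sup>i(h, -)\<close>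
  depends on \<open>h\<close> only through its compression; sequential rationality of \<open>g\<close> then forces
  \<open>\<rho>\<^sub>t(k)\<close> onto maximisers, and the same argument applied to the limit of \<open>\<rho>\<^sup>n\<close> (which is
  consistent with \<open>g\<close>) shows that the payoffs are unchanged.\<close>

lemma finite_set_pmf: "finite (set_pmf (M :: 'a::finite pmf))"
  by (rule finite_subset[OF subset_UNIV]) simp

lemma prob_eq_expectation_indicator: "measure_pmf.prob M A = measure_pmf.expectation M (indicator A)"
  by simp

lemma expectation_cong_pmf:
  fixes f g :: "'a \<Rightarrow> real"
  shows "(\<And>x. x \<in> set_pmf M \<Longrightarrow> f x = g x) \<Longrightarrow> measure_pmf.expectation M f = measure_pmf.expectation M g"
  by (intro integral_cong_AE) (auto simp: AE_measure_pmf_iff)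

lemma expectation_bind_pmf_finite:
  fixes f :: "'b \<Rightarrow> real"
  assumes M: "finite (set_pmf M)" and N: "\<And>x. x \<in> set_pmf M \<Longrightarrow> finite (set_pmf (N x))"
  shows "measure_pmf.expectation (bind_pmf M N) f =
    measure_pmf.expectation M (\<lambda>x. measure_pmf.expectation (N x) f)"
proof -
  have "measure_pmf.expectation (bind_pmf M N) f =
      (\<Sum>a\<in>set_pmf M. pmf M a *\<^sub>R measure_pmf.expectation (N a) f)"
    by (rule pmf_expectation_bind[OF M N order.refl])
  also have "\<dots> = measure_pmf.expectation M (\<lambda>x. measure_pmf.expectation (N x) f)"
    by (subst integral_measure_pmf_real[OF M]) (auto simp: mult.commute)
  finally show ?thesis .
qed

lemma expectation_indicator_single:
  fixes c :: "'a \<Rightarrow> real"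
  shows "measure_pmf.expectation M (\<lambda>a. indicator {u} a * c a) = pmf M u * c u"
  by (subst integral_measure_pmf_real[of "{u}"]) (auto simp: indicator_def)

lemma not_in_set_pmf_if_prob_zero:
  "measure_pmf.prob M {s. c s = k} = 0 \<Longrightarrow> s \<in> set_pmf M \<Longrightarrow> c s \<noteq> k"
  using measure_pmf_posI[of s M "{s. c s = k}"] by auto

lemma pmf_map_Pair: "pmf (map_pmf (\<lambda>a. (q, a)) N) (p, b) = (if q = p then pmf N b else 0)"
proof (cases "q = p")
  case True
  have "inj (\<lambda>a. (q, a))" by (auto intro: injI)
  then show ?thesis using True pmf_map_inj'[of "\<lambda>a. (q, a)" N b] by simp
next
  case False
  then have "(p, b) \<notin> set_pmf (map_pmf (\<lambda>a. (q, a)) N)" by auto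
  then show ?thesis using False by (simp add: pmf_eq_0_set_pmf)
qed

lemma pair_Pi_pmf_split:
  fixes p :: "'i::finite \<Rightarrow> 'u pmf"
  shows "pair_pmf (Pi_pmf UNIV d p) W =
    bind_pmf (p i) (\<lambda>a. map_pmf (\<lambda>(v,w). (v(i:=a), w)) (pair_pmf (Pi_pmf (UNIV - {i}) d p) W))"
proof -
  have "Pi_pmf UNIV d p = Pi_pmf (insert i (UNIV - {i})) d p" by (simp add: insert_absorb)
  also have "\<dots> = map_pmf (\<lambda>(a,v). v(i:=a)) (pair_pmf (p i) (Pi_pmf (UNIV - {i}) d p))"
    by (rule Pi_pmf_insert) auto
  finally show ?thesis
    unfolding pair_pmf_def map_pmf_def by (simp add: bind_assoc_pmf bind_return_pmf case_prod_unfold)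
qed

lemma expectation_Pi_pmf_fix:
  fixes p :: "'i::finite \<Rightarrow> 'u::finite pmf" and W :: "'w::finite pmf"
    and \<phi> :: "('i \<Rightarrow> 'u) \<Rightarrow> 'w \<Rightarrow> real"
  shows "measure_pmf.expectation (pair_pmf (Pi_pmf UNIV d p) W) (\<lambda>(u',w). indicator {u'. u' i = u} u' * \<phi> u' w) =
     pmf (p i) u * measure_pmf.expectation (pair_pmf (Pi_pmf (UNIV - {i}) d p) W) (\<lambda>(v,w). \<phi> (v(i:=u)) w)"
proof -
  let ?P = "pair_pmf (Pi_pmf (UNIV - {i}) d p) W"
  have inner: "measure_pmf.expectation (map_pmf (\<lambda>(v,w). (v(i:=a), w)) ?P)
      (\<lambda>(u',w). indicator {u'. u' i = u} u' * \<phi> u' w) =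
      indicator {u} a * measure_pmf.expectation ?P (\<lambda>(v,w). \<phi> (v(i:=a)) w)" for a
    by (cases "a = u") (simp_all add: case_prod_unfold)
  have "measure_pmf.expectation (pair_pmf (Pi_pmf UNIV d p) W) (\<lambda>(u',w). indicator {u'. u' i = u} u' * \<phi> u' w) =
      measure_pmf.expectation (p i) (\<lambda>a. measure_pmf.expectation (map_pmf (\<lambda>(v,w). (v(i:=a), w)) ?P)
        (\<lambda>(u',w). indicator {u'. u' i = u} u' * \<phi> u' w))"
    unfolding pair_Pi_pmf_split[where i=i] by (rule expectation_bind_pmf_finite) (rule finite_set_pmf)+
  also have "\<dots> = measure_pmf.expectation (p i)
      (\<lambda>a. indicator {u} a * measure_pmf.expectation ?P (\<lambda>(v,w). \<phi> (v(i:=a)) w))"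
    unfolding inner ..
  finally show ?thesis by (simp only: expectation_indicator_single fun_upd_same)
qed

definition pmf_avg :: "'u::finite pmf \<Rightarrow> ('u \<Rightarrow> real) \<Rightarrow> real" where
  "pmf_avg p f = (\<Sum>u\<in>UNIV. pmf p u * f u)"

lemma pmf_avg_argmax:
  assumes "set_pmf p \<subseteq> {u \<in> U. \<forall>u'\<in>U. f u' \<le> f u}" and "u0 \<in> {u \<in> U. \<forall>u'\<in>U. f u' \<le> f u}"
  shows "pmf_avg p f = f u0"
proof -
  have "pmf p u * f u = pmf p u * f u0" for u
  proof (cases "u \<in> set_pmf p")
    case True
    then have "u \<in> U" "\<forall>u'\<in>U. f u' \<le> f u" using assms(1) by auto
    moreover have "u0 \<in> U" "\<forall>u'\<in>U. f u' \<le> f u0" using assms(2) by auto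
    ultimately have "f u = f u0" by (meson antisym)
    then show ?thesis by simp
  qed (simp add: set_pmf_iff)
  then have "pmf_avg p f = (\<Sum>u\<in>UNIV. pmf p u * f u0)" unfolding pmf_avg_def by (rule sum.cong[OF refl])
  also have "\<dots> = f u0" by (simp add: sum_distrib_right[symmetric] sum_pmf_eq_1)
  finally show ?thesis .
qed

lemma pmf_avg_cong:
  "(\<And>u. u \<in> U \<Longrightarrow> f u = f' u) \<Longrightarrow> set_pmf p \<subseteq> U \<Longrightarrow> pmf_avg p f = pmf_avg p f'"
  unfolding pmf_avg_def by (intro sum.cong refl) (metis mult_eq_0_iff set_pmf_iff subsetD)

lemma bounded_convergent_subseq:
  fixes f :: "nat \<Rightarrow> 'a \<Rightarrow> real"
  assumes "finite I" and "\<And>n a. a \<in> I \<Longrightarrow> \<bar>f n a\<bar> \<le> B"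
  shows "\<exists>\<phi>. strict_mono \<phi> \<and> (\<forall>a\<in>I. convergent (\<lambda>n. f (\<phi> n) a))"
  using assms
proof (induction I rule: finite_induct)
  case empty
  show ?case by (intro exI[of _ id]) (auto simp: strict_mono_def)
next
  case (insert x F)
  then obtain \<phi> where \<phi>: "strict_mono \<phi>" "\<forall>a\<in>F. convergent (\<lambda>n. f (\<phi> n) a)" by auto
  have "bounded (range (\<lambda>n. f (\<phi> n) x))"
    unfolding bounded_iff using insert.prems by (intro exI[of _ B]) auto
  then obtain l r where r: "strict_mono r" "((\<lambda>n. f (\<phi> n) x) \<circ> r) \<longlonglongrightarrow> l"
    using bounded_imp_convergent_subsequence by blast
  have "convergent (\<lambda>n. f (\<phi> (r n)) a)" if a: "a \<in> insert x F" for a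
  proof (cases "a = x")
    case True then show ?thesis using r(2) by (auto simp: convergent_def o_def)
  next
    case False
    then obtain L where "(\<lambda>n. f (\<phi> n) a) \<longlonglongrightarrow> L" using a \<phi>(2) by (auto simp: convergent_def)
    from LIMSEQ_subseq_LIMSEQ[OF this r(1)] show ?thesis by (auto simp: convergent_def o_def)
  qed
  then show ?case using strict_mono_o[OF \<phi>(1) r(1)] by (intro exI[of _ "\<phi> \<circ> r"]) (auto simp: o_def)
qed

lemma convergent_pmf_limit:
  fixes p :: "nat \<Rightarrow> 'a::finite pmf"
  assumes "\<And>a. convergent (\<lambda>n. pmf (p n) a)"
  shows "\<exists>q. \<forall>a. (\<lambda>n. pmf (p n) a) \<longlonglongrightarrow> pmf q a"
proof -
  define L where "L a = lim (\<lambda>n. pmf (p n) a)" for a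
  have LL: "(\<lambda>n. pmf (p n) a) \<longlonglongrightarrow> L a" for a using assms unfolding L_def by (simp add: convergent_LIMSEQ_iff)
  have nn: "0 \<le> L a" for a by (rule LIMSEQ_le_const[OF LL]) auto
  have "(\<lambda>n. \<Sum>a\<in>UNIV. pmf (p n) a) \<longlonglongrightarrow> (\<Sum>a\<in>UNIV. L a)" by (intro tendsto_sum LL)
  then have "(\<Sum>a\<in>UNIV. L a) = 1" by (simp add: sum_pmf_eq_1 LIMSEQ_const_iff)
  then have "(\<integral>\<^sup>+x. ennreal (L x) \<partial>count_space UNIV) = 1"
    by (simp add: nn_integral_count_space_finite sum_ennreal nn)
  then have "pmf (embed_pmf L) a = L a" for a by (rule pmf_embed_pmf[OF nn])
  then show ?thesis using LL by (intro exI[of _ "embed_pmf L"]) auto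
qed

lemma convergent_subseq_pmfs:
  fixes p :: "nat \<Rightarrow> 'a \<Rightarrow> 'b::finite pmf"
  assumes "finite A"
  shows "\<exists>\<phi> q. strict_mono \<phi> \<and> (\<forall>a\<in>A. \<forall>b. (\<lambda>n. pmf (p (\<phi> n) a) b) \<longlonglongrightarrow> pmf (q a) b)"
proof -
  obtain \<phi> where \<phi>: "strict_mono \<phi>" "\<forall>ab\<in>A \<times> UNIV. convergent (\<lambda>n. pmf (p (\<phi> n) (fst ab)) (snd ab))"
    using bounded_convergent_subseq[of "A \<times> UNIV" "\<lambda>n ab. pmf (p n (fst ab)) (snd ab)" 1] assms
    by (auto simp: pmf_le_1)
  have "\<exists>q. \<forall>b. (\<lambda>n. pmf (p (\<phi> n) a) b) \<longlonglongrightarrow> pmf q b" if "a \<in> A" for a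
    using \<phi>(2) that by (intro convergent_pmf_limit) auto
  then obtain q where "\<forall>a\<in>A. \<forall>b. (\<lambda>n. pmf (p (\<phi> n) a) b) \<longlonglongrightarrow> pmf (q a) b" by metis
  then show ?thesis using \<phi>(1) by blast
qed

lemma bounded_times_null:
  fixes a b :: "nat \<Rightarrow> real"
  assumes "\<And>n. \<bar>a n\<bar> \<le> 1" and "b \<longlonglongrightarrow> 0"
  shows "(\<lambda>n. a n * b n) \<longlonglongrightarrow> 0"
proof (rule Lim_null_comparison[OF always_eventually])
  show "\<forall>n. norm (a n * b n) \<le> \<bar>b n\<bar>"
    using assms(1) by (simp add: abs_mult mult_left_le_one_le)
  show "(\<lambda>n. \<bar>b n\<bar>) \<longlonglongrightarrow> 0" using assms(2) by (rule tendsto_rabs_zero)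
qed

lemma sum_weighted_tendsto_zero:
  fixes a b :: "nat \<Rightarrow> 'a \<Rightarrow> real"
  assumes "finite Z" and "\<And>n z. \<bar>a n z\<bar> \<le> 1"
    and "\<And>z. z \<in> Z \<Longrightarrow> (\<forall>n. a n z = 0) \<or> (\<lambda>n. b n z) \<longlonglongrightarrow> 0"
  shows "(\<lambda>n. \<Sum>z\<in>Z. a n z * b n z) \<longlonglongrightarrow> 0"
proof -
  have "(\<lambda>n. a n z * b n z) \<longlonglongrightarrow> 0" if "z \<in> Z" for z
    using assms(3)[OF that] bounded_times_null[OF assms(2)] by auto
  then have "(\<lambda>n. \<Sum>z\<in>Z. a n z * b n z) \<longlonglongrightarrow> (\<Sum>z\<in>Z. 0)" by (intro tendsto_sum)
  then show ?thesis by simp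
qed

section \<open>The play as a Markov chain on states and histories\<close>

abbreviation snoc_hist :: "('h,'z) hist \<Rightarrow> 'z \<Rightarrow> ('h,'z) hist" where
  "snoc_hist h z \<equiv> (fst h, snd h @ [z])"

abbreviation snoc_hists :: "('i \<Rightarrow> ('h,'z) hist) \<Rightarrow> ('i \<Rightarrow> 'z) \<Rightarrow> 'i \<Rightarrow> ('h,'z) hist" where
  "snoc_hists hs z \<equiv> \<lambda>j. snoc_hist (hs j) (z j)"

definition state_step :: "('i::finite,'x,'u,'z,'w,'h,'m) game_scheme \<Rightarrow> ('i,'h,'z,'u) profile \<Rightarrow> nat
   \<Rightarrow> 'x \<times> ('i \<Rightarrow> ('h,'z) hist) \<Rightarrow> ('x \<times> ('i \<Rightarrow> ('h,'z) hist)) pmf" where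
  "state_step G g t s = bind_pmf (Pi_pmf UNIV undefined (\<lambda>j. g j t (snd s j))) (\<lambda>u.
     bind_pmf (gm_W G t) (\<lambda>w. case gm_f G t (fst s) u w of (x', z, r) \<Rightarrow>
        return_pmf (x', snoc_hists (snd s) z)))"

definition entry_kernel :: "('i::finite,'x,'u,'z,'w,'h,'m) game_scheme \<Rightarrow> ('i,'h,'z,'u) profile \<Rightarrow> nat
   \<Rightarrow> 'x \<times> ('i \<Rightarrow> ('h,'z) hist) \<Rightarrow> ('i,'x,'u,'z,'h) entry pmf" where
  "entry_kernel G g t s = bind_pmf (Pi_pmf UNIV undefined (\<lambda>j. g j t (snd s j))) (\<lambda>u.
     bind_pmf (gm_W G t) (\<lambda>w. case gm_f G t (fst s) u w of (x', z, r) \<Rightarrow>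
        return_pmf (fst s, snd s, u, r)))"

definition entry_step :: "('i::finite,'x,'u,'z,'w,'h,'m) game_scheme \<Rightarrow> ('i,'h,'z,'u) profile \<Rightarrow> nat
   \<Rightarrow> 'x \<times> ('i \<Rightarrow> ('h,'z) hist) \<Rightarrow> (('i,'x,'u,'z,'h) entry \<times> 'x \<times> ('i \<Rightarrow> ('h,'z) hist)) pmf" where
  "entry_step G g t s = bind_pmf (Pi_pmf UNIV undefined (\<lambda>j. g j t (snd s j))) (\<lambda>u.
     bind_pmf (gm_W G t) (\<lambda>w. case gm_f G t (fst s) u w of (x', z, r) \<Rightarrow>
        return_pmf ((fst s, snd s, u, r), (x', snoc_hists (snd s) z))))"

lemma map_fst_entry_step: "map_pmf fst (entry_step G g t s) = entry_kernel G g t s"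
  unfolding entry_step_def entry_kernel_def map_bind_pmf
  by (intro bind_pmf_cong refl) (auto split: prod.splits)

lemma map_snd_entry_step: "map_pmf snd (entry_step G g t s) = state_step G g t s"
  unfolding entry_step_def state_step_def map_bind_pmf
  by (intro bind_pmf_cong refl) (auto split: prod.splits)

lemma gen_Suc_entry_step: "gen G g (Suc n) t x hs =
   bind_pmf (entry_step G g t (x,hs)) (\<lambda>p. map_pmf ((#) (fst p)) (gen G g n (Suc t) (fst (snd p)) (snd (snd p))))"
  unfolding entry_step_def gen.simps bind_assoc_pmf
  by (intro bind_pmf_cong refl) (auto split: prod.splits simp: bind_return_pmf)

primrec state_iter :: "('i::finite,'x,'u,'z,'w,'h,'m) game_scheme \<Rightarrow> ('i,'h,'z,'u) profile \<Rightarrow> nat \<Rightarrow> nat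
   \<Rightarrow> 'x \<times> ('i \<Rightarrow> ('h,'z) hist) \<Rightarrow> ('x \<times> ('i \<Rightarrow> ('h,'z) hist)) pmf" where
  "state_iter G g 0 t s = return_pmf s"
| "state_iter G g (Suc m) t s = bind_pmf (state_step G g t s) (state_iter G g m (Suc t))"

lemma state_iter_0: "state_iter G g 0 t = return_pmf"
  by (rule ext) simp

lemma state_iter_Suc_right:
  "state_iter G g (Suc m) t = (\<lambda>s. bind_pmf (state_iter G g m t s) (state_step G g (t + m)))"
proof (induction m arbitrary: t)
  case 0
  show ?case by (simp add: state_iter_0 bind_return_pmf bind_return_pmf')
next
  case (Suc m)
  have "state_iter G g (Suc (Suc m)) t s =
      bind_pmf (state_step G g t s) (\<lambda>s'. bind_pmf (state_iter G g m (Suc t) s') (state_step G g (Suc t + m)))"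
    for s by (simp add: Suc)
  then show ?case by (simp add: bind_assoc_pmf)
qed

lemma nth_gen:
  "m < n \<Longrightarrow> map_pmf (\<lambda>tr. tr ! m) (gen G g n t (fst s) (snd s)) =
     bind_pmf (state_iter G g m t s) (entry_kernel G g (t + m))"
proof (induction m arbitrary: n t s)
  case 0
  then obtain n' where n: "n = Suc n'" by (cases n) auto
  have "map_pmf (\<lambda>tr. tr ! 0) (gen G g n t (fst s) (snd s)) = map_pmf fst (entry_step G g t s)"
    unfolding n gen_Suc_entry_step map_bind_pmf
    by (simp add: pmf.map_comp o_def map_pmf_const map_pmf_def[of fst])
  then show ?case by (simp add: map_fst_entry_step bind_return_pmf)
next
  case (Suc m)
  then obtain n' where n: "n = Suc n'" and mn: "m < n'" by (cases n) auto
  have "map_pmf (\<lambda>tr. tr ! Suc m) (gen G g n t (fst s) (snd s)) =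
     bind_pmf (entry_step G g t s) (\<lambda>p. map_pmf (\<lambda>tr. tr ! m) (gen G g n' (Suc t) (fst (snd p)) (snd (snd p))))"
    unfolding n gen_Suc_entry_step map_bind_pmf by (simp add: pmf.map_comp o_def)
  also have "\<dots> = bind_pmf (map_pmf snd (entry_step G g t s))
      (\<lambda>s'. bind_pmf (state_iter G g m (Suc t) s') (entry_kernel G g (Suc t + m)))"
    using Suc.IH[OF mn] by (simp add: bind_map_pmf)
  also have "\<dots> = bind_pmf (state_iter G g (Suc m) t s) (entry_kernel G g (t + Suc m))"
    by (simp add: map_snd_entry_step bind_assoc_pmf)
  finally show ?case .
qed

definition init_state :: "('i,'x,'u,'z,'w,'h,'m) game_scheme \<Rightarrow> ('x \<times> ('i \<Rightarrow> ('h,'z) hist)) pmf" where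
  "init_state G = map_pmf (\<lambda>(x,h1). (x, \<lambda>j. (h1 j, []))) (gm_init G)"

definition state_dist :: "('i::finite,'x,'u,'z,'w,'h,'m) game_scheme \<Rightarrow> ('i,'h,'z,'u) profile \<Rightarrow> nat
   \<Rightarrow> ('x \<times> ('i \<Rightarrow> ('h,'z) hist)) pmf" where
  "state_dist G g t = bind_pmf (init_state G) (state_iter G g (t - 1) 1)"

lemma state_dist_1: "state_dist G g 1 = init_state G"
  unfolding state_dist_def by (simp add: state_iter_0 bind_return_pmf')

lemma state_dist_Suc: "1 \<le> t \<Longrightarrow> state_dist G g (Suc t) = bind_pmf (state_dist G g t) (state_step G g t)"
  unfolding state_dist_def
  by (cases t) (auto simp: state_iter_Suc_right bind_assoc_pmf simp del: state_iter.simps)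

lemma entry_dist:
  assumes "1 \<le> t" "t \<le> gm_T G"
  shows "map_pmf (\<lambda>tr. tr ! (t - 1)) (run G g) = bind_pmf (state_dist G g t) (entry_kernel G g t)"
proof -
  have run: "run G g = bind_pmf (init_state G) (\<lambda>s. gen G g (gm_T G) 1 (fst s) (snd s))"
    unfolding run_def init_state_def by (simp add: bind_map_pmf case_prod_unfold)
  have "map_pmf (\<lambda>tr. tr ! (t - 1)) (run G g) =
     bind_pmf (init_state G) (\<lambda>s. bind_pmf (state_iter G g (t - 1) 1 s) (entry_kernel G g (1 + (t - 1))))"
    using assms unfolding run map_bind_pmf by (subst nth_gen) auto
  then show ?thesis using assms unfolding state_dist_def by (simp add: bind_assoc_pmf)
qed

lemma state_dist_eq_run:
  assumes "1 \<le> t" "t \<le> gm_T G"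
  shows "map_pmf (\<lambda>tr. (rvX tr t, rvH tr t)) (run G g) = state_dist G g t"
proof -
  have "map_pmf (\<lambda>e. (fst e, fst (snd e))) (entry_kernel G g t s) = return_pmf s" for s
    unfolding entry_kernel_def map_bind_pmf by (simp add: case_prod_unfold bind_return_pmf)
  then have "map_pmf (\<lambda>e. (fst e, fst (snd e))) (map_pmf (\<lambda>tr. tr ! (t - 1)) (run G g)) = state_dist G g t"
    by (simp only: entry_dist[OF assms] map_bind_pmf bind_return_pmf')
  then show ?thesis by (simp add: pmf.map_comp o_def rvX_def rvH_def)
qed

section \<open>Support of the play\<close>

lemma set_Pi_pmf_UNIV: "set_pmf (Pi_pmf (UNIV::'a::finite set) d p) = {f. \<forall>x. f x \<in> set_pmf (p x)}"
  by (simp add: set_Pi_pmf PiE_dflt_def)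

lemma valid_profile_action:
  "valid_profile G g \<Longrightarrow> t \<in> {1..gm_T G} \<Longrightarrow> wf_hist t h \<Longrightarrow> a \<in> set_pmf (g j t h) \<Longrightarrow> a \<in> gm_U G t j"
  unfolding valid_profile_def by blast

lemma gm_act_observed:
  assumes "wf_game G" "t \<in> {1..gm_T G}" "\<forall>j. u j \<in> gm_U G t j"
  shows "gm_act G t j (fst (snd (gm_f G t x u w)) j) = u j"
proof -
  have "\<forall>x u w. (\<forall>j. u j \<in> gm_U G t j) \<longrightarrow>
      (case gm_f G t x u w of (x', z, r) \<Rightarrow> (\<forall>j. gm_act G t j (z j) = u j \<and> -1 \<le> r j \<and> r j \<le> 1))"
    using bspec[OF conjunct2[OF assms(1)[unfolded wf_game_def]] assms(2)] .
  from this[THEN spec[of _ x], THEN spec[of _ u], THEN spec[of _ w], THEN mp, OF assms(3)]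
  show ?thesis by (cases "gm_f G t x u w") auto
qed

lemma set_pmf_gen_SucE:
  assumes "tr \<in> set_pmf (gen G g (Suc n) t x hs)"
  obtains u w rest where "\<forall>j. u j \<in> set_pmf (g j t (hs j))" "w \<in> set_pmf (gm_W G t)"
    "rest \<in> set_pmf (gen G g n (Suc t) (fst (gm_f G t x u w))
                        (snoc_hists hs (fst (snd (gm_f G t x u w)))))"
    "tr = (x, hs, u, snd (snd (gm_f G t x u w))) # rest"
proof -
  from assms obtain u w where "\<forall>j. u j \<in> set_pmf (g j t (hs j))" "w \<in> set_pmf (gm_W G t)"
    "tr \<in> set_pmf (case gm_f G t x u w of (x', z, r) \<Rightarrow> map_pmf (\<lambda>rest. (x, hs, u, r) # rest)
            (gen G g n (Suc t) x' (snoc_hists hs z)))"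
    by (auto simp: set_Pi_pmf_UNIV)
  then show ?thesis using that by (cases "gm_f G t x u w") auto
qed

definition consecutive :: "('i,'x,'u,'z,'w,'h,'m) game_scheme \<Rightarrow> nat
    \<Rightarrow> ('i,'x,'u,'z,'h) entry \<Rightarrow> ('i,'x,'u,'z,'h) entry \<Rightarrow> bool" where
  "consecutive G t e e' \<longleftrightarrow> (\<exists>z. (\<forall>j. gm_act G t j (z j) = fst (snd (snd e)) j) \<and>
      fst (snd e') = snoc_hists (fst (snd e)) z)"

lemma gen_support:
  assumes wf: "wf_game G" and vp: "valid_profile G g"
  shows "tr \<in> set_pmf (gen G g n t x hs) \<Longrightarrow> 1 \<le> t \<Longrightarrow> t + n \<le> gm_T G + 1 \<Longrightarrow> (\<forall>j. wf_hist t (hs j)) \<Longrightarrow>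
    length tr = n \<and> (n > 0 \<longrightarrow> fst (tr!0) = x \<and> fst (snd (tr!0)) = hs) \<and>
    (\<forall>m<n. \<forall>j. wf_hist (t+m) (fst (snd (tr!m)) j)) \<and>
    (\<forall>m. Suc m < n \<longrightarrow> consecutive G (t+m) (tr!m) (tr!Suc m))"
proof (induction n arbitrary: tr t x hs)
  case 0 then show ?case by simp
next
  case (Suc n)
  obtain u w rest where u: "\<forall>j. u j \<in> set_pmf (g j t (hs j))"
    and rest: "rest \<in> set_pmf (gen G g n (Suc t) (fst (gm_f G t x u w))
                        (snoc_hists hs (fst (snd (gm_f G t x u w)))))"
    and tr: "tr = (x, hs, u, snd (snd (gm_f G t x u w))) # rest"
    by (rule set_pmf_gen_SucE[OF Suc.prems(1)])
  have t: "t \<in> {1..gm_T G}" using Suc.prems by auto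
  have "\<forall>j. u j \<in> gm_U G t j" using u valid_profile_action[OF vp t] Suc.prems(4) by blast
  then have act: "\<forall>j. gm_act G t j (fst (snd (gm_f G t x u w)) j) = u j"
    using gm_act_observed[OF wf t] by blast
  have IH: "length rest = n \<and>
      (n > 0 \<longrightarrow> fst (snd (rest!0)) = (snoc_hists hs (fst (snd (gm_f G t x u w))))) \<and>
      (\<forall>m<n. \<forall>j. wf_hist (Suc t+m) (fst (snd (rest!m)) j)) \<and>
      (\<forall>m. Suc m < n \<longrightarrow> consecutive G (Suc t+m) (rest!m) (rest!Suc m))"
    using Suc.IH[OF rest] Suc.prems by (auto simp: wf_hist_def)
  show ?case
  proof (intro conjI allI impI)
    fix m j assume "m < Suc n"
    then show "wf_hist (t + m) (fst (snd (tr ! m)) j)"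
      using IH Suc.prems(4) tr by (cases m) auto
  next
    fix m assume m: "Suc m < Suc n"
    show "consecutive G (t + m) (tr ! m) (tr ! Suc m)"
    proof (cases m)
      case 0
      then show ?thesis using IH m tr act unfolding consecutive_def
        by (intro exI[of _ "fst (snd (gm_f G t x u w))"]) auto
    next
      case (Suc m')
      then show ?thesis using IH m tr by auto
    qed
  qed (use IH tr in simp_all)
qed

lemma run_support:
  assumes wf: "wf_game G" and vp: "valid_profile G g" and tr: "tr \<in> set_pmf (run G g)"
  shows "length tr = gm_T G" and "\<And>t j. t \<in> {1..gm_T G} \<Longrightarrow> wf_hist t (rvH tr t j)"
    and "\<And>t. 1 \<le> t \<Longrightarrow> t < gm_T G \<Longrightarrow> consecutive G t (tr!(t-1)) (tr!t)"
proof -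
  from tr obtain x h1 where tr': "tr \<in> set_pmf (gen G g (gm_T G) 1 x (\<lambda>j. (h1 j, [])))"
    unfolding run_def by auto
  have len: "length tr = gm_T G"
    and wf': "\<forall>m<gm_T G. \<forall>j. wf_hist (1 + m) (fst (snd (tr!m)) j)"
    and cons: "\<forall>m. Suc m < gm_T G \<longrightarrow> consecutive G (1 + m) (tr!m) (tr!Suc m)"
    using gen_support[OF wf vp tr'] by (auto simp: wf_hist_def)
  show "length tr = gm_T G" by (rule len)
  show "wf_hist t (rvH tr t j)" if "t \<in> {1..gm_T G}" for t j
  proof -
    have "t - 1 < gm_T G" using that by auto
    then show ?thesis using wf'[rule_format, of "t - 1" j] that unfolding rvH_def by simp
  qed
  show "consecutive G t (tr!(t-1)) (tr!t)" if "1 \<le> t" "t < gm_T G" for t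
    using cons[rule_format, of "t - 1"] that by simp
qed

lemma wf_hist_state_dist:
  "s \<in> set_pmf (state_dist G g t) \<Longrightarrow> 1 \<le> t \<Longrightarrow> wf_hist t (snd s j)"
proof (induction t arbitrary: s)
  case (Suc t)
  show ?case
  proof (cases "t = 0")
    case True
    then show ?thesis using Suc.prems by (auto simp: state_dist_1[simplified] init_state_def wf_hist_def)
  next
    case False
    then obtain s0 where s0: "s0 \<in> set_pmf (state_dist G g t)" and s: "s \<in> set_pmf (state_step G g t s0)"
      using Suc.prems by (auto simp: state_dist_Suc)
    from s obtain u w where "s \<in> set_pmf (case gm_f G t (fst s0) u w of (x', z, r) \<Rightarrow>
        return_pmf (x', snoc_hists (snd s0) z))"
      unfolding state_step_def by auto
    then obtain x' z where "s = (x', snoc_hists (snd s0) z)"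
      by (cases "gm_f G t (fst s0) u w") auto
    then show ?thesis using Suc.IH[OF s0] False by (auto simp: wf_hist_def)
  qed
qed simp

lemma rvH_Suc:
  assumes "wf_game G" "valid_profile G g" "tr \<in> set_pmf (run G g)" "1 \<le> \<tau>" "\<tau> < gm_T G"
  shows "\<exists>z. gm_act G \<tau> j z = rvU tr \<tau> j \<and> rvH tr (Suc \<tau>) j = snoc_hist (rvH tr \<tau> j) z"
  using run_support(3)[OF assms] unfolding consecutive_def rvH_def rvU_def by auto

lemma perfect_recall:
  assumes wf: "wf_game G" and vp: "valid_profile G g" and tr: "tr \<in> set_pmf (run G g)"
    and "1 \<le> \<tau>" "\<tau> \<le> t" "t \<le> gm_T G"
  shows "rvH tr \<tau> j = (fst (rvH tr t j), take (\<tau> - 1) (snd (rvH tr t j)))"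
  using assms(5,6)
proof (induction t rule: dec_induct)
  case base
  have "wf_hist \<tau> (rvH tr \<tau> j)" using run_support(2)[OF wf vp tr] assms by auto
  then show ?case by (simp add: wf_hist_def)
next
  case (step t)
  have w: "wf_hist t (rvH tr t j)" using run_support(2)[OF wf vp tr] step assms(4) by auto
  obtain z where "rvH tr (Suc t) j = snoc_hist (rvH tr t j) z"
    using rvH_Suc[OF wf vp tr, of t j] step assms(4) by auto
  then show ?case using step w by (simp add: wf_hist_def)
qed

lemma rvU_recall:
  assumes wf: "wf_game G" and vp: "valid_profile G g" and tr: "tr \<in> set_pmf (run G g)"
    and "1 \<le> \<tau>" "\<tau> < t" "t \<le> gm_T G"
  shows "rvU tr \<tau> j = gm_act G \<tau> j (snd (rvH tr t j) ! (\<tau> - 1))"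
proof -
  obtain z where z: "gm_act G \<tau> j z = rvU tr \<tau> j" "rvH tr (Suc \<tau>) j = snoc_hist (rvH tr \<tau> j) z"
    using rvH_Suc[OF wf vp tr, of \<tau> j] assms by auto
  have len: "length (snd (rvH tr \<tau> j)) = \<tau> - 1" using run_support(2)[OF wf vp tr] assms by (simp add: wf_hist_def)
  have "take \<tau> (snd (rvH tr t j)) = snd (rvH tr \<tau> j) @ [z]"
    using perfect_recall[OF wf vp tr, of "Suc \<tau>" t j] assms z by simp
  then have "take \<tau> (snd (rvH tr t j)) ! (\<tau> - 1) = z" using len by (metis nth_append_length)
  then show ?thesis using z assms by (simp add: nth_take)
qed

context
  fixes G :: "('i::finite,'x::finite,'u::finite,'z::finite,'w::finite,'h::finite,'m) game_scheme"
begin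

lemma finite_gen: "finite (set_pmf (gen G g n t x hs))"
proof (induction n arbitrary: t x hs)
  case (Suc n)
  have "finite (set_pmf (case gm_f G t x u w of (x', z, r) \<Rightarrow> map_pmf (\<lambda>rest. (x, hs, u, r) # rest)
            (gen G g n (Suc t) x' (snoc_hists hs z))))" for u w
    by (simp split: prod.split add: Suc)
  then show ?case
    by (simp only: gen.simps set_bind_pmf) (intro finite_UN_I finite_set_pmf)
qed simp

lemma finite_run: "finite (set_pmf (run G g))"
  unfolding run_def set_bind_pmf by (intro finite_UN_I finite_set_pmf) (auto intro: finite_gen)

lemma finite_state_step: "finite (set_pmf (state_step G g t s))"
  unfolding state_step_def set_bind_pmf by (intro finite_UN_I finite_set_pmf) (auto split: prod.splits)

lemma finite_entry_kernel: "finite (set_pmf (entry_kernel G g t s))"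
  unfolding entry_kernel_def set_bind_pmf by (intro finite_UN_I finite_set_pmf) (auto split: prod.splits)

lemma finite_state_dist: "finite (set_pmf (state_dist G g t))"
proof -
  have "finite (set_pmf (state_iter G g m t s))" for m t s
    by (induction m arbitrary: t s) (auto intro: finite_UN_I finite_state_step)
  then show ?thesis
    unfolding state_dist_def set_bind_pmf init_state_def by (intro finite_UN_I) (auto intro: finite_set_pmf)
qed

end

section \<open>Conditional independence from a product factorization\<close>

lemma others_upd_self: "o' i = undefined \<Longrightarrow> others i (o'(i := h)) = o'"
  by (auto simp: others_def)

lemma expectation_factorized_sum:
  fixes M :: "('x \<times> ('i \<Rightarrow> 'a)) pmf" and c :: "'a \<Rightarrow> 'k" and X :: "'a \<Rightarrow> 'x \<times> ('i \<Rightarrow> 'a) \<Rightarrow> real"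
  assumes fin: "finite (set_pmf M)"
    and prod: "\<And>x hs. pmf M (x,hs) * indicator {h. c h = k} (hs i) = P * F (hs i) * \<Phi> (x, others i hs)"
  defines "D \<equiv> set_pmf M \<inter> {s. c (snd s i) = k}"
  shows "measure_pmf.expectation M (\<lambda>s. indicator {h. c h = k} (snd s i) * X (snd s i) (fst s, others i (snd s))) =
     P * (\<Sum>h\<in>(\<lambda>s. snd s i) ` D. \<Sum>p\<in>(\<lambda>s. (fst s, others i (snd s))) ` D. F h * \<Phi> p * X h p)"
proof -
  define \<phi> where "\<phi> s = (snd s i, (fst s, others i (snd s)))" for s :: "'x \<times> ('i \<Rightarrow> 'a)"
  define D1 where "D1 = (\<lambda>s. snd s i) ` D"
  define D2 where "D2 = (\<lambda>s. (fst s, others i (snd s))) ` D"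
  have fin12: "finite (D1 \<times> D2)" using fin unfolding D1_def D2_def D_def by auto
  have "inj \<phi>"
    by (rule injI) (auto simp: \<phi>_def prod_eq_iff fun_eq_iff others_def split: if_splits)
  have pmf_split: "pmf (map_pmf \<phi> M) (h, p) * indicator {h. c h = k} h = P * F h * \<Phi> p" if "p \<in> D2" for h p
  proof -
    have "snd p i = undefined" using that unfolding D2_def by (auto simp: others_def)
    then have "\<phi> (fst p, (snd p)(i := h)) = (h, p)" by (simp add: \<phi>_def others_upd_self)
    then have "pmf (map_pmf \<phi> M) (h, p) = pmf M (fst p, (snd p)(i := h))"
      using pmf_map_inj'[OF \<open>inj \<phi>\<close>] by metis
    then show ?thesis
      using prod[of "fst p" "(snd p)(i := h)"] \<open>snd p i = undefined\<close> by (simp add: others_upd_self)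
  qed
  have "measure_pmf.expectation M (\<lambda>s. indicator {h. c h = k} (snd s i) * X (snd s i) (fst s, others i (snd s))) =
      measure_pmf.expectation (map_pmf \<phi> M) (\<lambda>(h, p). indicator {h. c h = k} h * X h p)"
    by (simp add: \<phi>_def)
  also have "\<dots> = (\<Sum>q\<in>D1 \<times> D2. (case q of (h, p) \<Rightarrow> indicator {h. c h = k} h * X h p) * pmf (map_pmf \<phi> M) q)"
    by (rule integral_measure_pmf_real[OF fin12])
       (auto simp: \<phi>_def D1_def D2_def D_def indicator_def split: if_splits)
  also have "\<dots> = (\<Sum>(h, p)\<in>D1 \<times> D2. P * (F h * \<Phi> p * X h p))"
    using pmf_split by (intro sum.cong refl) (auto simp: mult_ac)
  finally show ?thesis
    unfolding D1_def[symmetric] D2_def[symmetric] sum.cartesian_product[symmetric] sum_distrib_left .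
qed

lemma expectation_factorized_indep:
  fixes M :: "('x \<times> ('i \<Rightarrow> 'a)) pmf" and c :: "'a \<Rightarrow> 'k"
    and A :: "'a \<Rightarrow> real" and B :: "'x \<times> ('i \<Rightarrow> 'a) \<Rightarrow> real"
  assumes fin: "finite (set_pmf M)"
    and prod: "\<And>x hs. pmf M (x,hs) * indicator {h. c h = k} (hs i) = P * F (hs i) * \<Phi> (x, others i hs)"
  shows "measure_pmf.expectation M (\<lambda>s. indicator {h. c h = k} (snd s i) * A (snd s i) * B (fst s, others i (snd s))) *
         measure_pmf.expectation M (\<lambda>s. indicator {h. c h = k} (snd s i)) =
         measure_pmf.expectation M (\<lambda>s. indicator {h. c h = k} (snd s i) * A (snd s i)) *
         measure_pmf.expectation M (\<lambda>s. indicator {h. c h = k} (snd s i) * B (fst s, others i (snd s)))"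
proof -
  define D where "D = set_pmf M \<inter> {s. c (snd s i) = k}"
  define D1 where "D1 = (\<lambda>s. snd s i) ` D"
  define D2 where "D2 = (\<lambda>s. (fst s, others i (snd s))) ` D"
  note sums = expectation_factorized_sum[OF fin prod, folded D_def, folded D1_def D2_def]
  have "measure_pmf.expectation M (\<lambda>s. indicator {h. c h = k} (snd s i) * A (snd s i) * B (fst s, others i (snd s)))
      = P * ((\<Sum>h\<in>D1. F h * A h) * (\<Sum>p\<in>D2. \<Phi> p * B p))"
    using sums[of "\<lambda>h p. A h * B p"] unfolding sum_product by (simp add: mult_ac)
  moreover have "measure_pmf.expectation M (\<lambda>s. indicator {h. c h = k} (snd s i))
      = P * ((\<Sum>h\<in>D1. F h) * (\<Sum>p\<in>D2. \<Phi> p))"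
    using sums[of "\<lambda>h p. 1"] unfolding sum_product by (simp add: mult_ac)
  moreover have "measure_pmf.expectation M (\<lambda>s. indicator {h. c h = k} (snd s i) * A (snd s i))
      = P * ((\<Sum>h\<in>D1. F h * A h) * (\<Sum>p\<in>D2. \<Phi> p))"
    using sums[of "\<lambda>h p. A h"] unfolding sum_product by (simp add: mult_ac)
  moreover have "measure_pmf.expectation M (\<lambda>s. indicator {h. c h = k} (snd s i) * B (fst s, others i (snd s)))
      = P * ((\<Sum>h\<in>D1. F h) * (\<Sum>p\<in>D2. \<Phi> p * B p))"
    using sums[of "\<lambda>h p. B p"] unfolding sum_product by (simp add: mult_ac)
  ultimately show ?thesis by (simp add: mult_ac)
qed

abbreviation action_noise :: "('i::finite,'x,'u,'z,'w,'h,'m) game_scheme \<Rightarrow> ('i,'h,'z,'u) profile \<Rightarrow> nat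
    \<Rightarrow> 'x \<times> ('i \<Rightarrow> ('h,'z) hist) \<Rightarrow> (('i \<Rightarrow> 'u) \<times> 'w) pmf" where
  "action_noise G g t s \<equiv> pair_pmf (Pi_pmf UNIV undefined (\<lambda>j. g j t (snd s j))) (gm_W G t)"

abbreviation others_noise :: "('i::finite,'x,'u,'z,'w,'h,'m) game_scheme \<Rightarrow> ('i,'h,'z,'u) profile \<Rightarrow> nat
    \<Rightarrow> 'i \<Rightarrow> ('i \<Rightarrow> ('h,'z) hist) \<Rightarrow> (('i \<Rightarrow> 'u) \<times> 'w) pmf" where
  "others_noise G g t i hs \<equiv> pair_pmf (Pi_pmf (UNIV - {i}) undefined (\<lambda>j. g j t (hs j))) (gm_W G t)"

lemma entry_kernel_eq_map:
  "entry_kernel G g t s = map_pmf (\<lambda>(u,w). (fst s, snd s, u, snd (snd (gm_f G t (fst s) u w)))) (action_noise G g t s)"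
  unfolding entry_kernel_def pair_pmf_def map_bind_pmf by (simp add: bind_return_pmf case_prod_unfold)

lemma state_step_eq_map:
  "state_step G g t s = map_pmf (\<lambda>(u,w). (fst (gm_f G t (fst s) u w),
      snoc_hists (snd s) (fst (snd (gm_f G t (fst s) u w))))) (action_noise G g t s)"
  unfolding state_step_def pair_pmf_def map_bind_pmf by (simp add: bind_return_pmf case_prod_unfold)

lemma action_noise_support:
  assumes "wf_game G" "valid_profile G g" "s \<in> set_pmf (state_dist G g \<tau>)" "\<tau> \<in> {1..gm_T G}"
    and "(u, w) \<in> set_pmf (action_noise G g \<tau> s)"
  shows "gm_act G \<tau> j (fst (snd (gm_f G \<tau> (fst s) u w)) j) = u j"
proof -
  have "u j \<in> set_pmf (g j \<tau> (snd s j))" for j using assms(5) by (simp add: set_Pi_pmf_UNIV)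
  then have "\<forall>j. u j \<in> gm_U G \<tau> j"
    using valid_profile_action[OF assms(2,4) wf_hist_state_dist[OF assms(3)]] assms(4) by auto
  then show ?thesis using gm_act_observed[OF assms(1,4)] by blast
qed

definition Pr_hist :: "('i::finite,'x,'u,'z,'w,'h,'m) game_scheme \<Rightarrow> ('i,'h,'z,'u) profile \<Rightarrow> nat
    \<Rightarrow> 'i \<Rightarrow> ('h,'z) hist \<Rightarrow> real" where
  "Pr_hist G g \<tau> j h = measure_pmf.prob (state_dist G g \<tau>) {s. snd s j = h}"

definition reward_kernel :: "('i::finite,'x,'u,'z,'w,'h,'m) game_scheme \<Rightarrow> ('i,'h,'z,'u) profile \<Rightarrow> nat
    \<Rightarrow> 'i \<Rightarrow> 'x \<Rightarrow> ('i \<Rightarrow> ('h,'z) hist) \<Rightarrow> 'u \<Rightarrow> real" where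
  "reward_kernel G g \<tau> i x hs a =
     measure_pmf.expectation (others_noise G g \<tau> i hs) (\<lambda>(v,w). snd (snd (gm_f G \<tau> x (v(i:=a)) w)) i)"

definition obs_kernel :: "('i::finite,'x,'u,'z,'w,'h,'m) game_scheme \<Rightarrow> ('i,'h,'z,'u) profile \<Rightarrow> nat
    \<Rightarrow> 'i \<Rightarrow> 'x \<Rightarrow> ('i \<Rightarrow> ('h,'z) hist) \<Rightarrow> 'u \<Rightarrow> 'z \<Rightarrow> real" where
  "obs_kernel G g \<tau> i x hs a z =
     measure_pmf.expectation (others_noise G g \<tau> i hs) (\<lambda>(v,w). indicator {z} (fst (snd (gm_f G \<tau> x (v(i:=a)) w)) i))"

lemma others_noise_others: "others_noise G g \<tau> i (others i hs) = others_noise G g \<tau> i hs"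
  by (subst Pi_pmf_cong[where f'="\<lambda>j. g j \<tau> (hs j)"]) (auto simp: others_def)

lemma others_noise_cong:
  "(\<And>j. j \<noteq> i \<Longrightarrow> g' j \<tau> = g j \<tau>) \<Longrightarrow> others_noise G g' \<tau> i hs = others_noise G g \<tau> i hs"
  by (subst Pi_pmf_cong[where f'="\<lambda>j. g j \<tau> (hs j)"]) auto

lemma obs_kernel_bounds: "0 \<le> obs_kernel G g \<tau> i x hs a z" "obs_kernel G g \<tau> i x hs a z \<le> 1"
proof -
  have eq: "obs_kernel G g \<tau> i x hs a z =
      measure_pmf.prob (others_noise G g \<tau> i hs) {(v,w). fst (snd (gm_f G \<tau> x (v(i:=a)) w)) i = z}"
    unfolding obs_kernel_def prob_eq_expectation_indicator
    by (intro Bochner_Integration.integral_cong refl) (auto simp: indicator_def)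
  show "0 \<le> obs_kernel G g \<tau> i x hs a z" unfolding eq by (rule measure_nonneg)
  show "obs_kernel G g \<tau> i x hs a z \<le> 1" unfolding eq by (rule measure_pmf.prob_le_1)
qed

context
  fixes G :: "('i::finite,'x::finite,'u::finite,'z::finite,'w::finite,'h::finite,'m) game_scheme"
begin

lemma expectation_run_entry:
  fixes F :: "_ \<Rightarrow> real"
  assumes "1 \<le> t" "t \<le> gm_T G"
  shows "measure_pmf.expectation (run G g) (\<lambda>tr. F (tr ! (t - 1))) =
    measure_pmf.expectation (state_dist G g t) (\<lambda>s. measure_pmf.expectation (action_noise G g t s)
       (\<lambda>(u,w). F (fst s, snd s, u, snd (snd (gm_f G t (fst s) u w)))))"
proof -
  have "measure_pmf.expectation (run G g) (\<lambda>tr. F (tr ! (t - 1))) =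
     measure_pmf.expectation (bind_pmf (state_dist G g t) (entry_kernel G g t)) F"
    using entry_dist[OF assms] by (metis integral_map_pmf)
  also have "\<dots> = measure_pmf.expectation (state_dist G g t) (\<lambda>s. measure_pmf.expectation (entry_kernel G g t s) F)"
    by (rule expectation_bind_pmf_finite) (auto intro: finite_state_dist finite_entry_kernel)
  finally show ?thesis by (simp add: entry_kernel_eq_map case_prod_unfold)
qed

lemma expectation_state_dist_Suc:
  fixes F :: "_ \<Rightarrow> real"
  assumes "1 \<le> t"
  shows "measure_pmf.expectation (state_dist G g (Suc t)) F =
    measure_pmf.expectation (state_dist G g t) (\<lambda>s. measure_pmf.expectation (action_noise G g t s)
       (\<lambda>(u,w). F (fst (gm_f G t (fst s) u w), snoc_hists (snd s) (fst (snd (gm_f G t (fst s) u w))))))"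
proof -
  have "measure_pmf.expectation (state_dist G g (Suc t)) F =
      measure_pmf.expectation (state_dist G g t) (\<lambda>s. measure_pmf.expectation (state_step G g t s) F)"
    unfolding state_dist_Suc[OF assms]
    by (rule expectation_bind_pmf_finite) (auto intro: finite_state_dist finite_state_step)
  then show ?thesis by (simp add: state_step_eq_map case_prod_unfold)
qed

lemma expectation_run_action_event:
  fixes \<psi> :: "real \<Rightarrow> real"
  assumes "1 \<le> \<tau>" "\<tau> \<le> gm_T G"
  shows "measure_pmf.expectation (run G g)
      (\<lambda>tr. indicator {tr. rvH tr \<tau> j = h \<and> rvU tr \<tau> j = u} tr * \<psi> (rvR tr \<tau> j)) =
    pmf (g j \<tau> h) u * measure_pmf.expectation (state_dist G g \<tau>) (\<lambda>s. indicator {s. snd s j = h} s *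
       measure_pmf.expectation (others_noise G g \<tau> j (snd s)) (\<lambda>(v,w). \<psi> (snd (snd (gm_f G \<tau> (fst s) (v(j:=u)) w)) j)))"
proof -
  have "measure_pmf.expectation (run G g)
      (\<lambda>tr. indicator {tr. rvH tr \<tau> j = h \<and> rvU tr \<tau> j = u} tr * \<psi> (rvR tr \<tau> j)) =
     measure_pmf.expectation (run G g) (\<lambda>tr. (\<lambda>e. indicator {e. fst (snd e) j = h} e *
        (indicator {e. fst (snd (snd e)) j = u} e * \<psi> (snd (snd (snd e)) j))) (tr ! (\<tau> - 1)))"
    by (intro Bochner_Integration.integral_cong refl) (auto simp: indicator_def rvH_def rvU_def rvR_def)
  also have "\<dots> = measure_pmf.expectation (state_dist G g \<tau>) (\<lambda>s. measure_pmf.expectation (action_noise G g \<tau> s)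
      (\<lambda>(u',w). (\<lambda>e. indicator {e. fst (snd e) j = h} e *
        (indicator {e. fst (snd (snd e)) j = u} e * \<psi> (snd (snd (snd e)) j)))
          (fst s, snd s, u', snd (snd (gm_f G \<tau> (fst s) u' w)))))"
    by (rule expectation_run_entry[OF assms])
  also have "\<dots> = measure_pmf.expectation (state_dist G g \<tau>) (\<lambda>s. indicator {s. snd s j = h} s *
      measure_pmf.expectation (action_noise G g \<tau> s)
       (\<lambda>(u',w). indicator {u'. u' j = u} u' * \<psi> (snd (snd (gm_f G \<tau> (fst s) u' w)) j)))"
    by (intro Bochner_Integration.integral_cong refl) (auto simp: indicator_def case_prod_unfold)
  also have "\<dots> = measure_pmf.expectation (state_dist G g \<tau>) (\<lambda>s. indicator {s. snd s j = h} s *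
       (pmf (g j \<tau> (snd s j)) u * measure_pmf.expectation (others_noise G g \<tau> j (snd s))
         (\<lambda>(v,w). \<psi> (snd (snd (gm_f G \<tau> (fst s) (v(j:=u)) w)) j))))"
    by (simp only: expectation_Pi_pmf_fix fun_upd_same)
  also have "\<dots> = measure_pmf.expectation (state_dist G g \<tau>) (\<lambda>s. pmf (g j \<tau> h) u * (indicator {s. snd s j = h} s *
       measure_pmf.expectation (others_noise G g \<tau> j (snd s)) (\<lambda>(v,w). \<psi> (snd (snd (gm_f G \<tau> (fst s) (v(j:=u)) w)) j))))"
    by (intro Bochner_Integration.integral_cong refl) (auto simp: indicator_def)
  finally show ?thesis by simp
qed

lemma Pr_hist_action:
  assumes "1 \<le> \<tau>" "\<tau> \<le> gm_T G"
  shows "Pr G g {tr. rvH tr \<tau> j = h \<and> rvU tr \<tau> j = u} = Pr_hist G g \<tau> j h * pmf (g j \<tau> h) u"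
  using expectation_run_action_event[OF assms, where \<psi>="\<lambda>_. 1"]
  by (simp add: Pr_def Pr_hist_def mult.commute case_prod_unfold)

lemma expectation_reward_event:
  assumes "1 \<le> \<tau>" "\<tau> \<le> gm_T G"
  shows "measure_pmf.expectation (run G g) (\<lambda>tr. indicator {tr. rvH tr \<tau> i = h \<and> rvU tr \<tau> i = u} tr * rvR tr \<tau> i) =
    pmf (g i \<tau> h) u * measure_pmf.expectation (state_dist G g \<tau>)
      (\<lambda>s. indicator {s. snd s i = h} s * reward_kernel G g \<tau> i (fst s) (snd s) u)"
  using expectation_run_action_event[OF assms, where \<psi>="\<lambda>r. r"] by (simp add: reward_kernel_def)

lemma expectation_next_hist:
  assumes "wf_game G" "valid_profile G g" "s \<in> set_pmf (state_dist G g \<tau>)" "\<tau> \<in> {1..gm_T G}"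
  shows "measure_pmf.expectation (action_noise G g \<tau> s)
      (\<lambda>(u,w). indicator {s'. snd s' i = snoc_hist h z} (fst (gm_f G \<tau> (fst s) u w),
         snoc_hists (snd s) (fst (snd (gm_f G \<tau> (fst s) u w))))) =
    indicator {s. snd s i = h} s *
      (pmf (g i \<tau> (snd s i)) (gm_act G \<tau> i z) * obs_kernel G g \<tau> i (fst s) (snd s) (gm_act G \<tau> i z) z)"
proof -
  have "measure_pmf.expectation (action_noise G g \<tau> s)
      (\<lambda>(u,w). indicator {s'. snd s' i = snoc_hist h z} (fst (gm_f G \<tau> (fst s) u w),
         snoc_hists (snd s) (fst (snd (gm_f G \<tau> (fst s) u w)))) :: real) =
    measure_pmf.expectation (action_noise G g \<tau> s) (\<lambda>(u,w). indicator {s. snd s i = h} s *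
      (indicator {u. u i = gm_act G \<tau> i z} u * indicator {z} (fst (snd (gm_f G \<tau> (fst s) u w)) i) :: real))"
  proof (rule expectation_cong_pmf, goal_cases)
    case (1 uw)
    then show ?case using action_noise_support[OF assms, of "fst uw" "snd uw" i]
      by (auto simp: indicator_def prod_eq_iff)
  qed
  also have "\<dots> = indicator {s. snd s i = h} s * measure_pmf.expectation (action_noise G g \<tau> s)
      (\<lambda>(u,w). indicator {u. u i = gm_act G \<tau> i z} u * indicator {z} (fst (snd (gm_f G \<tau> (fst s) u w)) i))"
    by (simp add: case_prod_unfold)
  finally show ?thesis
    using expectation_Pi_pmf_fix[where i=i and u="gm_act G \<tau> i z" and p="\<lambda>j. g j \<tau> (snd s j)"
        and W="gm_W G \<tau>" and d=undefined and \<phi>="\<lambda>u w. indicator {z} (fst (snd (gm_f G \<tau> (fst s) u w)) i)"]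
    unfolding obs_kernel_def by simp
qed

lemma Pr_hist_snoc:
  assumes wf: "wf_game G" and vp: "valid_profile G g" and t: "1 \<le> \<tau>" "\<tau> < gm_T G"
  shows "Pr_hist G g (Suc \<tau>) i (snoc_hist h z) = pmf (g i \<tau> h) (gm_act G \<tau> i z) *
     measure_pmf.expectation (state_dist G g \<tau>)
       (\<lambda>s. indicator {s. snd s i = h} s * obs_kernel G g \<tau> i (fst s) (snd s) (gm_act G \<tau> i z) z)"
proof -
  have "Pr_hist G g (Suc \<tau>) i (snoc_hist h z) =
      measure_pmf.expectation (state_dist G g (Suc \<tau>)) (indicator {s. snd s i = snoc_hist h z})"
    unfolding Pr_hist_def by simp
  also have "\<dots> = measure_pmf.expectation (state_dist G g \<tau>) (\<lambda>s. indicator {s. snd s i = h} s *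
      (pmf (g i \<tau> (snd s i)) (gm_act G \<tau> i z) * obs_kernel G g \<tau> i (fst s) (snd s) (gm_act G \<tau> i z) z))"
    unfolding expectation_state_dist_Suc[OF t(1)]
    by (intro expectation_cong_pmf expectation_next_hist[OF wf vp]) (use t in auto)
  also have "\<dots> = measure_pmf.expectation (state_dist G g \<tau>) (\<lambda>s. pmf (g i \<tau> h) (gm_act G \<tau> i z) *
      (indicator {s. snd s i = h} s * obs_kernel G g \<tau> i (fst s) (snd s) (gm_act G \<tau> i z) z))"
    by (intro Bochner_Integration.integral_cong refl) (auto simp: indicator_def)
  finally show ?thesis by simp
qed

lemma Pr_state_event:
  assumes "1 \<le> t" "t \<le> gm_T G"
  shows "Pr G g {tr. P (rvX tr t) (rvH tr t)} = measure_pmf.prob (state_dist G g t) {s. P (fst s) (snd s)}"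
proof -
  have "Pr G g {tr. P (rvX tr t) (rvH tr t)} =
      measure_pmf.prob (map_pmf (\<lambda>tr. (rvX tr t, rvH tr t)) (run G g)) {s. P (fst s) (snd s)}"
    unfolding Pr_def by (simp add: vimage_def)
  then show ?thesis using state_dist_eq_run[OF assms] by simp
qed

end

section \<open>Unilaterally sufficient information\<close>

definition Pr_K :: "('i::finite,'x,'u,'z,'w,'h,'m) game_scheme \<Rightarrow> ('i,'h,'z,'u) profile
    \<Rightarrow> ('i \<Rightarrow> 'h \<Rightarrow> 'k) \<Rightarrow> (nat \<Rightarrow> 'i \<Rightarrow> 'k \<Rightarrow> 'z \<Rightarrow> 'k) \<Rightarrow> 'i \<Rightarrow> nat \<Rightarrow> 'k \<Rightarrow> real" where
  "Pr_K G g \<iota>1 \<iota> i t k = measure_pmf.prob (state_dist G g t) {s. compress \<iota>1 \<iota> i (snd s i) = k}"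

text \<open>The conclusion of USI for a single profile, so \<open>F\<close> and \<open>\<Phi>\<close> may depend on all of \<open>g\<close>.\<close>
definition state_factorizes :: "('i::finite,'x,'u,'z,'w,'h,'m) game_scheme \<Rightarrow> ('i,'h,'z,'u) profile
    \<Rightarrow> ('i \<Rightarrow> 'h \<Rightarrow> 'k) \<Rightarrow> (nat \<Rightarrow> 'i \<Rightarrow> 'k \<Rightarrow> 'z \<Rightarrow> 'k) \<Rightarrow> 'i \<Rightarrow> bool" where
  "state_factorizes G g \<iota>1 \<iota> i \<longleftrightarrow> (\<exists>F \<Phi>. \<forall>t\<in>{1..gm_T G}. \<forall>k x hs.
     pmf (state_dist G g t) (x,hs) * indicator {h. compress \<iota>1 \<iota> i h = k} (hs i) =
     Pr_K G g \<iota>1 \<iota> i t k * F t k (hs i) * \<Phi> t k (x, others i hs))"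

context
  fixes G :: "('i::finite,'x::finite,'u::finite,'z::finite,'w::finite,'h::finite,'m) game_scheme"
    and \<iota>1 :: "'i \<Rightarrow> 'h \<Rightarrow> 'k" and \<iota> :: "nat \<Rightarrow> 'i \<Rightarrow> 'k \<Rightarrow> 'z \<Rightarrow> 'k" and i :: 'i
begin

lemma Pr_state_K:
  assumes "t \<in> {1..gm_T G}"
  shows "Pr G g ({tr. rvX tr t = x \<and> rvH tr t = hs} \<inter> {tr. compress \<iota>1 \<iota> i (rvH tr t i) = k}) =
    pmf (state_dist G g t) (x,hs) * indicator {h. compress \<iota>1 \<iota> i h = k} (hs i)"
proof -
  have "Pr G g ({tr. rvX tr t = x \<and> rvH tr t = hs} \<inter> {tr. compress \<iota>1 \<iota> i (rvH tr t i) = k}) =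
      measure_pmf.prob (state_dist G g t) {s. fst s = x \<and> snd s = hs \<and> compress \<iota>1 \<iota> i (snd s i) = k}"
    using Pr_state_event[where P="\<lambda>x' hs'. x' = x \<and> hs' = hs \<and> compress \<iota>1 \<iota> i (hs' i) = k"] assms
    by (auto simp: Int_def)
  also have "{s. fst s = x \<and> snd s = hs \<and> compress \<iota>1 \<iota> i (snd s i) = k} =
      (if compress \<iota>1 \<iota> i (hs i) = k then {(x,hs)} else {})" by auto
  finally show ?thesis by (auto simp: measure_pmf_single)
qed

lemma USI_imp_state_factorizes:
  assumes "USI G \<iota>1 \<iota> i" and vp: "valid_profile G g"
  shows "state_factorizes G g \<iota>1 \<iota> i"
proof -
  obtain F \<Phi> where FP: "\<forall>g. valid_profile G g \<longrightarrow> (\<forall>t\<in>{1..gm_T G}. \<forall>k.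
      Pr G g {tr. compress \<iota>1 \<iota> i (rvH tr t i) = k} > 0 \<longrightarrow>
      (\<forall>x hs. cond_Pr G g {tr. rvX tr t = x \<and> rvH tr t = hs} {tr. compress \<iota>1 \<iota> i (rvH tr t i) = k}
          = pmf (F (g i) t k) (hs i) * pmf (\<Phi> (others i g) t k) (x, others i hs)))"
    using assms(1) unfolding USI_def by blast
  have "pmf (state_dist G g t) (x,hs) * indicator {h. compress \<iota>1 \<iota> i h = k} (hs i) =
      Pr_K G g \<iota>1 \<iota> i t k * pmf (F (g i) t k) (hs i) * pmf (\<Phi> (others i g) t k) (x, others i hs)"
    if t: "t \<in> {1..gm_T G}" for t k x hs
  proof -
    have PK: "Pr G g {tr. compress \<iota>1 \<iota> i (rvH tr t i) = k} = Pr_K G g \<iota>1 \<iota> i t k"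
      using Pr_state_event[where P="\<lambda>x hs. compress \<iota>1 \<iota> i (hs i) = k"] t unfolding Pr_K_def by auto
    show ?thesis
    proof (cases "Pr_K G g \<iota>1 \<iota> i t k > 0")
      case True
      then have "cond_Pr G g {tr. rvX tr t = x \<and> rvH tr t = hs} {tr. compress \<iota>1 \<iota> i (rvH tr t i) = k}
          = pmf (F (g i) t k) (hs i) * pmf (\<Phi> (others i g) t k) (x, others i hs)"
        using FP vp t PK by auto
      then show ?thesis using True unfolding cond_Pr_def Pr_state_K[OF t] PK by (simp add: field_simps)
    next
      case False
      then have "Pr_K G g \<iota>1 \<iota> i t k = 0" unfolding Pr_K_def by (simp add: order.strict_iff_order)
      moreover have "pmf (state_dist G g t) (x,hs) * indicator {h. compress \<iota>1 \<iota> i h = k} (hs i) \<le> Pr_K G g \<iota>1 \<iota> i t k"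
        unfolding Pr_K_def by (auto simp: indicator_def measure_pmf_single[symmetric] intro!: measure_pmf.finite_measure_mono)
      moreover have "pmf (state_dist G g t) (x,hs) * indicator {h. compress \<iota>1 \<iota> i h = k} (hs i) \<ge> 0" by simp
      ultimately show ?thesis by simp
    qed
  qed
  then show ?thesis unfolding state_factorizes_def
    by (intro exI[of _ "\<lambda>t k. pmf (F (g i) t k)"] exI[of _ "\<lambda>t k. pmf (\<Phi> (others i g) t k)"]) blast
qed

lemma state_dist_indep:
  fixes A :: "('h,'z) hist \<Rightarrow> real" and B :: "'x \<times> ('i \<Rightarrow> ('h,'z) hist) \<Rightarrow> real"
  assumes "state_factorizes G g \<iota>1 \<iota> i" and "t \<in> {1..gm_T G}"
  shows "measure_pmf.expectation (state_dist G g t) (\<lambda>s. indicator {h. compress \<iota>1 \<iota> i h = k} (snd s i) * A (snd s i) * B (fst s, others i (snd s))) *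
         measure_pmf.expectation (state_dist G g t) (\<lambda>s. indicator {h. compress \<iota>1 \<iota> i h = k} (snd s i)) =
         measure_pmf.expectation (state_dist G g t) (\<lambda>s. indicator {h. compress \<iota>1 \<iota> i h = k} (snd s i) * A (snd s i)) *
         measure_pmf.expectation (state_dist G g t) (\<lambda>s. indicator {h. compress \<iota>1 \<iota> i h = k} (snd s i) * B (fst s, others i (snd s)))"
proof -
  obtain F \<Phi> where "\<forall>t\<in>{1..gm_T G}. \<forall>k x hs. pmf (state_dist G g t) (x,hs) * indicator {h. compress \<iota>1 \<iota> i h = k} (hs i) =
      Pr_K G g \<iota>1 \<iota> i t k * F t k (hs i) * \<Phi> t k (x, others i hs)"
    using assms(1) unfolding state_factorizes_def by blast
  then have "\<And>x hs. pmf (state_dist G g t) (x,hs) * indicator {h. compress \<iota>1 \<iota> i h = k} (hs i) =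
      Pr_K G g \<iota>1 \<iota> i t k * F t k (hs i) * \<Phi> t k (x, others i hs)"
    using assms(2) by blast
  then show ?thesis by (rule expectation_factorized_indep[OF finite_state_dist])
qed

lemma expectation_indicator_K:
  "measure_pmf.expectation (state_dist G g t) (\<lambda>s. indicator {h. compress \<iota>1 \<iota> i h = k} (snd s i)) = Pr_K G g \<iota>1 \<iota> i t k"
  unfolding Pr_K_def prob_eq_expectation_indicator
  by (intro Bochner_Integration.integral_cong refl) (simp add: indicator_def)

lemma expectation_K_null:
  fixes f :: "'x \<times> ('i \<Rightarrow> ('h,'z) hist) \<Rightarrow> real"
  assumes "Pr_K G g \<iota>1 \<iota> i t k = 0"
  shows "measure_pmf.expectation (state_dist G g t) (\<lambda>s. indicator {h. compress \<iota>1 \<iota> i h = k} (snd s i) * f s) = 0"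
proof -
  have "s \<in> set_pmf (state_dist G g t) \<Longrightarrow> compress \<iota>1 \<iota> i (snd s i) \<noteq> k" for s
    using not_in_set_pmf_if_prob_zero assms unfolding Pr_K_def by metis
  then show ?thesis by (subst expectation_cong_pmf[where g="\<lambda>_. 0"]) auto
qed

end

section \<open>Replacing player \<open>i\<close>'s strategy by a \<open>K\<^sup>i\<close>-based one\<close>

lemma compress_snoc:
  assumes "length (snd h) = t - 1" "1 \<le> t"
  shows "compress \<iota>1 \<iota> j (snoc_hist h z) = \<iota> (Suc t) j (compress \<iota>1 \<iota> j h) z"
proof -
  have "zip [2..<length (snd h @ [z]) + 2] (snd h @ [z]) = zip [2..<length (snd h) + 2] (snd h) @ [(Suc t, z)]"
    using assms by (simp del: upt_Suc add: upt_Suc_append zip_append)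
  then show ?thesis unfolding compress_def by (simp del: upt_Suc)
qed

definition cview :: "('i \<Rightarrow> 'h \<Rightarrow> 'k) \<Rightarrow> (nat \<Rightarrow> 'i \<Rightarrow> 'k \<Rightarrow> 'z \<Rightarrow> 'k) \<Rightarrow> 'i
    \<Rightarrow> 'x \<times> ('i \<Rightarrow> ('h,'z) hist) \<Rightarrow> 'x \<times> ('i \<Rightarrow> ('h,'z) hist) \<times> 'k" where
  "cview \<iota>1 \<iota> i s = (fst s, others i (snd s), compress \<iota>1 \<iota> i (snd s i))"

definition cview_step :: "('i::finite,'x,'u,'z,'w,'h,'m) game_scheme \<Rightarrow> ('i,'h,'z,'u) profile
    \<Rightarrow> (nat \<Rightarrow> 'i \<Rightarrow> 'k \<Rightarrow> 'z \<Rightarrow> 'k) \<Rightarrow> 'i \<Rightarrow> nat \<Rightarrow> 'x \<times> ('i \<Rightarrow> ('h,'z) hist) \<times> 'k \<Rightarrow> 'u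
    \<Rightarrow> ('x \<times> ('i \<Rightarrow> ('h,'z) hist) \<times> 'k) pmf" where
  "cview_step G g \<iota> i t p a = map_pmf (\<lambda>(v,w). (fst (gm_f G t (fst p) (v(i:=a)) w),
      others i (snoc_hists (fst (snd p)) (fst (snd (gm_f G t (fst p) (v(i:=a)) w)))),
      \<iota> (Suc t) i (snd (snd p)) (fst (snd (gm_f G t (fst p) (v(i:=a)) w)) i)))
    (others_noise G g t i (fst (snd p)))"

definition erase_hist :: "'i \<Rightarrow> ('i,'x,'u,'z,'h) entry \<Rightarrow> ('i,'x,'u,'z,'h) entry" where
  "erase_hist i e = (fst e, others i (fst (snd e)), fst (snd (snd e)), snd (snd (snd e)))"

definition cview_entry :: "('i::finite,'x,'u,'z,'w,'h,'m) game_scheme \<Rightarrow> ('i,'h,'z,'u) profile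
    \<Rightarrow> 'i \<Rightarrow> nat \<Rightarrow> 'x \<times> ('i \<Rightarrow> ('h,'z) hist) \<times> 'k \<Rightarrow> 'u \<Rightarrow> ('i,'x,'u,'z,'h) entry pmf" where
  "cview_entry G g i t p a = map_pmf (\<lambda>(v,w). (fst p, fst (snd p), v(i:=a), snd (snd (gm_f G t (fst p) (v(i:=a)) w))))
    (others_noise G g t i (fst (snd p)))"

lemma cview_step_cong: "(\<And>j. j \<noteq> i \<Longrightarrow> g' j = g j) \<Longrightarrow> cview_step G g' \<iota> i t p a = cview_step G g \<iota> i t p a"
  unfolding cview_step_def by (subst others_noise_cong) auto

lemma cview_entry_cong: "(\<And>j. j \<noteq> i \<Longrightarrow> g' j = g j) \<Longrightarrow> cview_entry G g' i t p a = cview_entry G g i t p a"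
  unfolding cview_entry_def by (subst others_noise_cong) auto

lemma map_cview_state_step:
  assumes "wf_hist t (snd s i)" "1 \<le> t"
  shows "map_pmf (cview \<iota>1 \<iota> i) (state_step G g t s) =
    bind_pmf (g i t (snd s i)) (cview_step G g \<iota> i t (cview \<iota>1 \<iota> i s))"
proof -
  have c: "compress \<iota>1 \<iota> i (snoc_hist (snd s i) z) = \<iota> (Suc t) i (compress \<iota>1 \<iota> i (snd s i)) z" for z
    using compress_snoc[of "snd s i" t] assms by (simp add: wf_hist_def)
  have o: "others i (snoc_hists (snd s) z) = others i (snoc_hists (others i (snd s)) z)" for z
    by (auto simp: others_def)
  show ?thesis
    unfolding state_step_eq_map pair_Pi_pmf_split[where i=i] map_bind_pmf cview_step_def
    by (intro bind_pmf_cong refl)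
       (simp add: pmf.map_comp o_def case_prod_unfold cview_def c o others_noise_others)
qed

lemma map_erase_hist_entry_kernel:
  "map_pmf (erase_hist i) (entry_kernel G g t s) =
    bind_pmf (g i t (snd s i)) (cview_entry G g i t (cview \<iota>1 \<iota> i s))"
  unfolding entry_kernel_eq_map pair_Pi_pmf_split[where i=i] map_bind_pmf cview_entry_def
  by (intro bind_pmf_cong refl)
     (simp add: pmf.map_comp o_def case_prod_unfold cview_def erase_hist_def others_noise_others)

definition action_mass_K :: "('i::finite,'x,'u,'z,'w,'h,'m) game_scheme \<Rightarrow> ('i,'h,'z,'u) profile
    \<Rightarrow> ('i \<Rightarrow> 'h \<Rightarrow> 'k) \<Rightarrow> (nat \<Rightarrow> 'i \<Rightarrow> 'k \<Rightarrow> 'z \<Rightarrow> 'k) \<Rightarrow> 'i \<Rightarrow> nat \<Rightarrow> 'k \<Rightarrow> 'u \<Rightarrow> real" where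
  "action_mass_K G g \<iota>1 \<iota> i t k a = measure_pmf.expectation (state_dist G g t)
     (\<lambda>s. indicator {h. compress \<iota>1 \<iota> i h = k} (snd s i) * pmf (g i t (snd s i)) a)"

text \<open>\<open>\<rho>\<^sub>t(k)\<close> is the law of \<open>U\<^sub>t\<^sup>i\<close> given \<open>K\<^sub>t\<^sup>i = k\<close> under \<open>g\<close>, wherever this is defined.\<close>
definition consistent_with :: "('i::finite,'x,'u,'z,'w,'h,'m) game_scheme \<Rightarrow> ('i,'h,'z,'u) profile
    \<Rightarrow> ('i \<Rightarrow> 'h \<Rightarrow> 'k) \<Rightarrow> (nat \<Rightarrow> 'i \<Rightarrow> 'k \<Rightarrow> 'z \<Rightarrow> 'k) \<Rightarrow> 'i \<Rightarrow> (nat \<Rightarrow> 'k \<Rightarrow> 'u pmf) \<Rightarrow> bool" where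
  "consistent_with G g \<iota>1 \<iota> i \<rho> \<longleftrightarrow> (\<forall>t\<in>{1..gm_T G}. \<forall>k. Pr_K G g \<iota>1 \<iota> i t k > 0 \<longrightarrow>
     (\<forall>a. pmf (\<rho> t k) a * Pr_K G g \<iota>1 \<iota> i t k = action_mass_K G g \<iota>1 \<iota> i t k a))"

context
  fixes G :: "('i::finite,'x::finite,'u::finite,'z::finite,'w::finite,'h::finite,'m) game_scheme"
    and \<iota>1 :: "'i \<Rightarrow> 'h \<Rightarrow> 'k" and \<iota> :: "nat \<Rightarrow> 'i \<Rightarrow> 'k \<Rightarrow> 'z \<Rightarrow> 'k" and i :: 'i
    and g :: "('i,'h,'z,'u) profile" and \<rho> :: "nat \<Rightarrow> 'k \<Rightarrow> 'u pmf"
  assumes factorizes: "state_factorizes G g \<iota>1 \<iota> i" and consistent: "consistent_with G g \<iota>1 \<iota> i \<rho>"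
begin

lemma expectation_action_given_K:
  fixes B :: "'x \<times> ('i \<Rightarrow> ('h,'z) hist) \<Rightarrow> real"
  assumes t: "t \<in> {1..gm_T G}"
  shows "measure_pmf.expectation (state_dist G g t)
      (\<lambda>s. indicator {h. compress \<iota>1 \<iota> i h = k} (snd s i) * pmf (g i t (snd s i)) a * B (fst s, others i (snd s))) =
    pmf (\<rho> t k) a * measure_pmf.expectation (state_dist G g t)
      (\<lambda>s. indicator {h. compress \<iota>1 \<iota> i h = k} (snd s i) * B (fst s, others i (snd s)))"
proof (cases "Pr_K G g \<iota>1 \<iota> i t k > 0")
  case True
  let ?L = "measure_pmf.expectation (state_dist G g t)
      (\<lambda>s. indicator {h. compress \<iota>1 \<iota> i h = k} (snd s i) * pmf (g i t (snd s i)) a * B (fst s, others i (snd s)))"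
  let ?EB = "measure_pmf.expectation (state_dist G g t)
      (\<lambda>s. indicator {h. compress \<iota>1 \<iota> i h = k} (snd s i) * B (fst s, others i (snd s)))"
  have "?L * Pr_K G g \<iota>1 \<iota> i t k = action_mass_K G g \<iota>1 \<iota> i t k a * ?EB"
    using state_dist_indep[OF factorizes t, of k "\<lambda>h. pmf (g i t h) a" B]
    unfolding expectation_indicator_K action_mass_K_def .
  also have "action_mass_K G g \<iota>1 \<iota> i t k a = pmf (\<rho> t k) a * Pr_K G g \<iota>1 \<iota> i t k"
    using consistent t True unfolding consistent_with_def by simp
  finally have "?L * Pr_K G g \<iota>1 \<iota> i t k = (pmf (\<rho> t k) a * ?EB) * Pr_K G g \<iota>1 \<iota> i t k"
    by (simp add: mult_ac)
  then show ?thesis using True by simp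
next
  case False
  then have "Pr_K G g \<iota>1 \<iota> i t k = 0" unfolding Pr_K_def by (simp add: order.strict_iff_order)
  then show ?thesis using expectation_K_null[of G g \<iota>1 \<iota> i t k] by (simp add: mult.assoc)
qed

text \<open>This is where USI enters: given \<open>(X\<^sub>t, H\<^sub>t\<^sup>-\<^sup>i, K\<^sub>t\<^sup>i)\<close>, player \<open>i\<close>'s action is
  distributed as \<open>\<rho>\<^sub>t(K\<^sub>t\<^sup>i)\<close>.\<close>
lemma joint_cview_action:
  assumes t: "t \<in> {1..gm_T G}"
  shows "bind_pmf (state_dist G g t) (\<lambda>s. map_pmf (\<lambda>a. (cview \<iota>1 \<iota> i s, a)) (g i t (snd s i))) =
         bind_pmf (map_pmf (cview \<iota>1 \<iota> i) (state_dist G g t)) (\<lambda>p. map_pmf (\<lambda>a. (p, a)) (\<rho> t (snd (snd p))))"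
proof (rule pmf_eqI)
  fix pa :: "('x \<times> ('i \<Rightarrow> ('h,'z) hist) \<times> 'k) \<times> 'u"
  obtain x0 o0 k0 a0 where pa: "pa = ((x0, o0, k0), a0)" by (cases pa) auto
  let ?B = "\<lambda>p :: 'x \<times> ('i \<Rightarrow> ('h,'z) hist). indicator {(x0, o0)} p :: real"
  have "pmf (bind_pmf (state_dist G g t) (\<lambda>s. map_pmf (\<lambda>a. (cview \<iota>1 \<iota> i s, a)) (g i t (snd s i)))) pa =
      measure_pmf.expectation (state_dist G g t) (\<lambda>s. indicator {h. compress \<iota>1 \<iota> i h = k0} (snd s i) *
        pmf (g i t (snd s i)) a0 * ?B (fst s, others i (snd s)))"
    unfolding pmf_bind pa pmf_map_Pair
    by (intro Bochner_Integration.integral_cong refl) (auto simp: cview_def indicator_def)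
  also have "\<dots> = pmf (\<rho> t k0) a0 * measure_pmf.expectation (state_dist G g t)
      (\<lambda>s. indicator {h. compress \<iota>1 \<iota> i h = k0} (snd s i) * ?B (fst s, others i (snd s)))"
    by (rule expectation_action_given_K[OF t])
  also have "\<dots> = measure_pmf.expectation (state_dist G g t) (\<lambda>s. pmf (\<rho> t k0) a0 *
      (indicator {h. compress \<iota>1 \<iota> i h = k0} (snd s i) * ?B (fst s, others i (snd s))))"
    by simp
  also have "\<dots> = pmf (bind_pmf (map_pmf (cview \<iota>1 \<iota> i) (state_dist G g t))
      (\<lambda>p. map_pmf (\<lambda>a. (p, a)) (\<rho> t (snd (snd p))))) pa"
    unfolding pmf_bind pa pmf_map_Pair integral_map_pmf
    by (intro Bochner_Integration.integral_cong refl) (auto simp: cview_def indicator_def)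
  finally show "pmf (bind_pmf (state_dist G g t) (\<lambda>s. map_pmf (\<lambda>a. (cview \<iota>1 \<iota> i s, a)) (g i t (snd s i)))) pa =
    pmf (bind_pmf (map_pmf (cview \<iota>1 \<iota> i) (state_dist G g t)) (\<lambda>p. map_pmf (\<lambda>a. (p, a)) (\<rho> t (snd (snd p))))) pa" .
qed

lemma bind_cview_action:
  assumes t: "t \<in> {1..gm_T G}"
  shows "bind_pmf (state_dist G g t) (\<lambda>s. bind_pmf (g i t (snd s i)) (N (cview \<iota>1 \<iota> i s))) =
    bind_pmf (map_pmf (cview \<iota>1 \<iota> i) (state_dist G g t)) (\<lambda>p. bind_pmf (\<rho> t (snd (snd p))) (N p))"
proof -
  have "bind_pmf (state_dist G g t) (\<lambda>s. bind_pmf (g i t (snd s i)) (N (cview \<iota>1 \<iota> i s))) =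
      bind_pmf (bind_pmf (state_dist G g t) (\<lambda>s. map_pmf (\<lambda>a. (cview \<iota>1 \<iota> i s, a)) (g i t (snd s i))))
        (\<lambda>pa. N (fst pa) (snd pa))"
    by (simp add: bind_assoc_pmf bind_map_pmf)
  also have "\<dots> = bind_pmf (map_pmf (cview \<iota>1 \<iota> i) (state_dist G g t)) (\<lambda>p. bind_pmf (\<rho> t (snd (snd p))) (N p))"
    unfolding joint_cview_action[OF t] by (simp add: bind_assoc_pmf bind_map_pmf)
  finally show ?thesis .
qed

lemma bind_cview_K_based:
  "bind_pmf (map_pmf (cview \<iota>1 \<iota> i) M) (\<lambda>p. bind_pmf (\<rho> t (snd (snd p))) (N p)) =
    bind_pmf M (\<lambda>s. bind_pmf (Kbased \<iota>1 \<iota> i \<rho> t (snd s i)) (N (cview \<iota>1 \<iota> i s)))"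
  by (simp add: bind_map_pmf Kbased_def cview_def)

lemma cview_state_dist_eq:
  defines "g' \<equiv> g(i := Kbased \<iota>1 \<iota> i \<rho>)"
  shows "1 \<le> t \<Longrightarrow> t \<le> gm_T G \<Longrightarrow>
    map_pmf (cview \<iota>1 \<iota> i) (state_dist G g t) = map_pmf (cview \<iota>1 \<iota> i) (state_dist G g' t)"
proof (induction t rule: nat_induct_at_least)
  case base
  show ?case using state_dist_1[of G g] state_dist_1[of G g'] by simp
next
  case (Suc t)
  have t: "t \<in> {1..gm_T G}" using Suc by auto
  have step: "cview_step G g' \<iota> i t = cview_step G g \<iota> i t" unfolding g'_def by (intro ext cview_step_cong) simp
  have unfold: "map_pmf (cview \<iota>1 \<iota> i) (state_dist G gg (Suc t)) =
      bind_pmf (state_dist G gg t) (\<lambda>s. bind_pmf (gg i t (snd s i)) (cview_step G gg \<iota> i t (cview \<iota>1 \<iota> i s)))" for gg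
    unfolding state_dist_Suc[OF Suc.hyps(1)] map_bind_pmf
    by (intro bind_pmf_cong refl map_cview_state_step wf_hist_state_dist) (use Suc in auto)
  have "map_pmf (cview \<iota>1 \<iota> i) (state_dist G g (Suc t)) =
      bind_pmf (map_pmf (cview \<iota>1 \<iota> i) (state_dist G g t)) (\<lambda>p. bind_pmf (\<rho> t (snd (snd p))) (cview_step G g \<iota> i t p))"
    unfolding unfold by (rule bind_cview_action[OF t])
  also have "\<dots> = bind_pmf (map_pmf (cview \<iota>1 \<iota> i) (state_dist G g' t))
      (\<lambda>p. bind_pmf (\<rho> t (snd (snd p))) (cview_step G g' \<iota> i t p))"
    using Suc by (simp add: step)
  also have "\<dots> = map_pmf (cview \<iota>1 \<iota> i) (state_dist G g' (Suc t))"
    unfolding unfold bind_cview_K_based by (simp add: g'_def)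
  finally show ?case .
qed

lemma erase_hist_entry_dist_eq:
  assumes "1 \<le> t" "t \<le> gm_T G"
  shows "map_pmf (erase_hist i) (map_pmf (\<lambda>tr. tr ! (t - 1)) (run G g)) =
    map_pmf (erase_hist i) (map_pmf (\<lambda>tr. tr ! (t - 1)) (run G (g(i := Kbased \<iota>1 \<iota> i \<rho>))))"
proof -
  let ?g' = "g(i := Kbased \<iota>1 \<iota> i \<rho>)"
  have t: "t \<in> {1..gm_T G}" using assms by auto
  have entry: "cview_entry G ?g' i t = cview_entry G g i t" by (intro ext cview_entry_cong) simp
  have unfold: "map_pmf (erase_hist i) (map_pmf (\<lambda>tr. tr ! (t - 1)) (run G gg)) =
      bind_pmf (state_dist G gg t) (\<lambda>s. bind_pmf (gg i t (snd s i)) (cview_entry G gg i t (cview \<iota>1 \<iota> i s)))" for gg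
    unfolding entry_dist[OF assms] map_bind_pmf map_erase_hist_entry_kernel[of i G gg t _ \<iota>1 \<iota>] ..
  have "map_pmf (erase_hist i) (map_pmf (\<lambda>tr. tr ! (t - 1)) (run G g)) =
      bind_pmf (map_pmf (cview \<iota>1 \<iota> i) (state_dist G g t)) (\<lambda>p. bind_pmf (\<rho> t (snd (snd p))) (cview_entry G g i t p))"
    unfolding unfold by (rule bind_cview_action[OF t])
  also have "\<dots> = bind_pmf (map_pmf (cview \<iota>1 \<iota> i) (state_dist G ?g' t))
      (\<lambda>p. bind_pmf (\<rho> t (snd (snd p))) (cview_entry G ?g' i t p))"
    using cview_state_dist_eq[OF assms] by (simp add: entry)
  also have "\<dots> = map_pmf (erase_hist i) (map_pmf (\<lambda>tr. tr ! (t - 1)) (run G ?g'))"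
    unfolding unfold bind_cview_K_based by simp
  finally show ?thesis .
qed

end

section \<open>Payoffs and the other players' beliefs\<close>

definition Q_cond :: "('i::finite,'x,'u,'z,'w,'h,'m) game_scheme \<Rightarrow> ('i,'h,'z,'u) profile
    \<Rightarrow> 'i \<Rightarrow> nat \<Rightarrow> ('h,'z) hist \<Rightarrow> 'u \<Rightarrow> real" where
  "Q_cond G g j \<tau> h u = cond_E G g (\<lambda>tr. \<Sum>t\<in>{\<tau>..gm_T G}. rvR tr t j) {tr. rvH tr \<tau> j = h \<and> rvU tr \<tau> j = u}"

text \<open>By perfect recall, \<open>1{H\<^sub>\<tau>\<^sup>j = h, U\<^sub>\<tau>\<^sup>j = u} R\<^sub>t\<^sup>j\<close> is a function of the entry at time \<open>t \<ge> \<tau>\<close>,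
  and for \<open>j \<noteq> i\<close> even of that entry with \<open>H\<^sub>t\<^sup>i\<close> erased.\<close>
definition reward_on_event :: "('i,'x,'u,'z,'w,'h,'m) game_scheme \<Rightarrow> 'i \<Rightarrow> nat \<Rightarrow> ('h,'z) hist \<Rightarrow> 'u \<Rightarrow> nat
    \<Rightarrow> ('i,'x,'u,'z,'h) entry \<Rightarrow> real" where
  "reward_on_event G j \<tau> h u t e =
     (if fst (fst (snd e) j) = fst h \<and> take (\<tau> - 1) (snd (fst (snd e) j)) = snd h \<and>
         (if t = \<tau> then fst (snd (snd e)) j = u else gm_act G \<tau> j (snd (fst (snd e) j) ! (\<tau> - 1)) = u)
      then snd (snd (snd e)) j else 0)"

context
  fixes G :: "('i::finite,'x::finite,'u::finite,'z::finite,'w::finite,'h::finite,'m) game_scheme"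
begin

lemma integrable_run: "integrable (measure_pmf (run G g)) (f :: _ \<Rightarrow> real)"
  by (rule integrable_measure_pmf_finite[OF finite_run])

lemma J_sum: "J G g j = (\<Sum>t\<in>{1..gm_T G}. measure_pmf.expectation (run G g) (\<lambda>tr. rvR tr t j))"
  unfolding J_def by (rule Bochner_Integration.integral_sum) (rule integrable_run)

lemma expectation_reward_event_erased:
  assumes wf: "wf_game G" and vp: "valid_profile G g" and ji: "j \<noteq> i"
    and \<tau>: "1 \<le> \<tau>" "\<tau> \<le> t" "t \<le> gm_T G"
  shows "measure_pmf.expectation (run G g) (\<lambda>tr. indicator {tr. rvH tr \<tau> j = h \<and> rvU tr \<tau> j = u} tr * rvR tr t j) =
         measure_pmf.expectation (run G g) (\<lambda>tr. reward_on_event G j \<tau> h u t (erase_hist i (tr ! (t - 1))))"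
proof (rule expectation_cong_pmf)
  fix tr assume tr: "tr \<in> set_pmf (run G g)"
  have pr: "rvH tr \<tau> j = (fst (rvH tr t j), take (\<tau> - 1) (snd (rvH tr t j)))"
    by (rule perfect_recall[OF wf vp tr \<tau>])
  have ar: "t \<noteq> \<tau> \<Longrightarrow> rvU tr \<tau> j = gm_act G \<tau> j (snd (rvH tr t j) ! (\<tau> - 1))"
    by (rule rvU_recall[OF wf vp tr]) (use \<tau> in auto)
  have o: "others i (fst (snd (tr ! (t - 1)))) j = rvH tr t j" using ji by (simp add: others_def rvH_def)
  show "indicator {tr. rvH tr \<tau> j = h \<and> rvU tr \<tau> j = u} tr * rvR tr t j =
      reward_on_event G j \<tau> h u t (erase_hist i (tr ! (t - 1)))"
    unfolding reward_on_event_def erase_hist_def fst_conv snd_conv o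
    using pr ar by (cases "t = \<tau>") (auto simp: indicator_def rvU_def rvR_def prod_eq_iff)
qed

end

context
  fixes G :: "('i::finite,'x::finite,'u::finite,'z::finite,'w::finite,'h::finite,'m) game_scheme"
    and \<iota>1 :: "'i \<Rightarrow> 'h \<Rightarrow> 'k" and \<iota> :: "nat \<Rightarrow> 'i \<Rightarrow> 'k \<Rightarrow> 'z \<Rightarrow> 'k" and i :: 'i
    and g :: "('i,'h,'z,'u) profile" and \<rho> :: "nat \<Rightarrow> 'k \<Rightarrow> 'u pmf"
  assumes factorizes: "state_factorizes G g \<iota>1 \<iota> i" and consistent: "consistent_with G g \<iota>1 \<iota> i \<rho>"
begin

lemma expectation_erased_entry_eq:
  fixes F :: "('i,'x,'u,'z,'h) entry \<Rightarrow> real"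
  assumes "1 \<le> t" "t \<le> gm_T G"
  shows "measure_pmf.expectation (run G (g(i := Kbased \<iota>1 \<iota> i \<rho>))) (\<lambda>tr. F (erase_hist i (tr ! (t - 1)))) =
    measure_pmf.expectation (run G g) (\<lambda>tr. F (erase_hist i (tr ! (t - 1))))"
proof -
  have "measure_pmf.expectation (run G (g(i := Kbased \<iota>1 \<iota> i \<rho>))) (\<lambda>tr. F (erase_hist i (tr ! (t - 1)))) =
      measure_pmf.expectation (map_pmf (erase_hist i) (map_pmf (\<lambda>tr. tr ! (t - 1)) (run G (g(i := Kbased \<iota>1 \<iota> i \<rho>))))) F"
    by simp
  also have "\<dots> = measure_pmf.expectation (map_pmf (erase_hist i) (map_pmf (\<lambda>tr. tr ! (t - 1)) (run G g))) F"
    unfolding erase_hist_entry_dist_eq[OF factorizes consistent assms] ..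
  finally show ?thesis by simp
qed

lemma J_K_based: "J G (g(i := Kbased \<iota>1 \<iota> i \<rho>)) j = J G g j"
  unfolding J_sum
proof (intro sum.cong refl)
  fix t assume "t \<in> {1..gm_T G}"
  then show "measure_pmf.expectation (run G (g(i := Kbased \<iota>1 \<iota> i \<rho>))) (\<lambda>tr. rvR tr t j) =
      measure_pmf.expectation (run G g) (\<lambda>tr. rvR tr t j)"
    using expectation_erased_entry_eq[where F="\<lambda>e. snd (snd (snd e)) j", of t]
    by (simp add: rvR_def erase_hist_def)
qed

lemma Pr_event_other:
  assumes "j \<noteq> i" "1 \<le> \<tau>" "\<tau> \<le> gm_T G"
  shows "Pr G (g(i := Kbased \<iota>1 \<iota> i \<rho>)) {tr. rvH tr \<tau> j = h \<and> rvU tr \<tau> j = u} =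
    Pr G g {tr. rvH tr \<tau> j = h \<and> rvU tr \<tau> j = u}"
proof -
  have "Pr G gg {tr. rvH tr \<tau> j = h \<and> rvU tr \<tau> j = u} = measure_pmf.expectation (run G gg)
      (\<lambda>tr. indicator {e. fst (snd e) j = h \<and> fst (snd (snd e)) j = u} (erase_hist i (tr ! (\<tau> - 1))))" for gg
    unfolding Pr_def prob_eq_expectation_indicator using assms(1)
    by (intro Bochner_Integration.integral_cong refl) (simp add: indicator_def erase_hist_def others_def rvH_def rvU_def)
  then show ?thesis by (simp only: expectation_erased_entry_eq[OF assms(2,3)])
qed

lemma Q_cond_other:
  assumes wf: "wf_game G" and vp: "valid_profile G g" and vp': "valid_profile G (g(i := Kbased \<iota>1 \<iota> i \<rho>))"
    and ji: "j \<noteq> i" and \<tau>: "1 \<le> \<tau>" "\<tau> \<le> gm_T G"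
  shows "Q_cond G (g(i := Kbased \<iota>1 \<iota> i \<rho>)) j \<tau> h u = Q_cond G g j \<tau> h u"
proof -
  have num: "measure_pmf.expectation (run G gg)
      (\<lambda>tr. indicator {tr. rvH tr \<tau> j = h \<and> rvU tr \<tau> j = u} tr * (\<Sum>t\<in>{\<tau>..gm_T G}. rvR tr t j)) =
    (\<Sum>t\<in>{\<tau>..gm_T G}. measure_pmf.expectation (run G gg) (\<lambda>tr. reward_on_event G j \<tau> h u t (erase_hist i (tr ! (t - 1)))))"
    if "valid_profile G gg" for gg
    unfolding sum_distrib_left
    by (subst Bochner_Integration.integral_sum[OF integrable_run])
       (intro sum.cong refl expectation_reward_event_erased[OF wf that ji \<tau>(1)], auto)
  show ?thesis
    unfolding Q_cond_def cond_E_def num[OF vp] num[OF vp'] Pr_event_other[OF ji \<tau>]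
    using expectation_erased_entry_eq[where F="reward_on_event G j \<tau> h u _"] \<tau> by simp
qed

end

section \<open>A Bellman recursion for player \<open>i\<close>\<close>

definition reward_given_K :: "('i::finite,'x,'u,'z,'w,'h,'m) game_scheme \<Rightarrow> ('i,'h,'z,'u) profile
    \<Rightarrow> ('i \<Rightarrow> 'h \<Rightarrow> 'k) \<Rightarrow> (nat \<Rightarrow> 'i \<Rightarrow> 'k \<Rightarrow> 'z \<Rightarrow> 'k) \<Rightarrow> 'i \<Rightarrow> nat \<Rightarrow> 'k \<Rightarrow> 'u \<Rightarrow> real" where
  "reward_given_K G g \<iota>1 \<iota> i \<tau> k u = measure_pmf.expectation (state_dist G g \<tau>)
     (\<lambda>s. indicator {h. compress \<iota>1 \<iota> i h = k} (snd s i) * reward_kernel G g \<tau> i (fst s) (others i (snd s)) u)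
     / Pr_K G g \<iota>1 \<iota> i \<tau> k"

definition obs_given_K :: "('i::finite,'x,'u,'z,'w,'h,'m) game_scheme \<Rightarrow> ('i,'h,'z,'u) profile
    \<Rightarrow> ('i \<Rightarrow> 'h \<Rightarrow> 'k) \<Rightarrow> (nat \<Rightarrow> 'i \<Rightarrow> 'k \<Rightarrow> 'z \<Rightarrow> 'k) \<Rightarrow> 'i \<Rightarrow> nat \<Rightarrow> 'k \<Rightarrow> 'z \<Rightarrow> real" where
  "obs_given_K G g \<iota>1 \<iota> i \<tau> k z = measure_pmf.expectation (state_dist G g \<tau>)
     (\<lambda>s. indicator {h. compress \<iota>1 \<iota> i h = k} (snd s i) * obs_kernel G g \<tau> i (fst s) (others i (snd s)) (gm_act G \<tau> i z) z)
     / Pr_K G g \<iota>1 \<iota> i \<tau> k"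

definition value_cond :: "('i::finite,'x,'u::finite,'z,'w,'h,'m) game_scheme \<Rightarrow> ('i,'h,'z,'u) profile
    \<Rightarrow> 'i \<Rightarrow> nat \<Rightarrow> ('h,'z) hist \<Rightarrow> real" where
  "value_cond G g i t h = pmf_avg (g i t h) (Q_cond G g i t h)"

definition Q_numer :: "('i::finite,'x,'u,'z,'w,'h,'m) game_scheme \<Rightarrow> ('i,'h,'z,'u) profile
    \<Rightarrow> 'i \<Rightarrow> nat \<Rightarrow> ('h,'z) hist \<Rightarrow> 'u \<Rightarrow> real" where
  "Q_numer G g j \<tau> h u = measure_pmf.expectation (run G g)
     (\<lambda>tr. indicator {tr. rvH tr \<tau> j = h \<and> rvU tr \<tau> j = u} tr * (\<Sum>t\<in>{\<tau>..gm_T G}. rvR tr t j))"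

lemma Q_cond_eq_numer: "Q_cond G g j \<tau> h u = Q_numer G g j \<tau> h u / Pr G g {tr. rvH tr \<tau> j = h \<and> rvU tr \<tau> j = u}"
  unfolding Q_cond_def Q_numer_def cond_E_def ..

lemma Q_numer_eq: "Q_numer G g j \<tau> h u = Pr G g {tr. rvH tr \<tau> j = h \<and> rvU tr \<tau> j = u} * Q_cond G g j \<tau> h u"
proof (cases "Pr G g {tr. rvH tr \<tau> j = h \<and> rvU tr \<tau> j = u} = 0")
  case True
  then have "tr \<in> set_pmf (run G g) \<Longrightarrow> \<not> (rvH tr \<tau> j = h \<and> rvU tr \<tau> j = u)" for tr
    using measure_pmf_posI[of tr "run G g" "{tr. rvH tr \<tau> j = h \<and> rvU tr \<tau> j = u}"] unfolding Pr_def by auto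
  then have "Q_numer G g j \<tau> h u = 0"
    unfolding Q_numer_def by (subst expectation_cong_pmf[where g="\<lambda>_. 0"]) auto
  then show ?thesis using True by simp
qed (simp add: Q_cond_eq_numer)

context
  fixes G :: "('i::finite,'x::finite,'u::finite,'z::finite,'w::finite,'h::finite,'m) game_scheme"
    and \<iota>1 :: "'i \<Rightarrow> 'h \<Rightarrow> 'k" and \<iota> :: "nat \<Rightarrow> 'i \<Rightarrow> 'k \<Rightarrow> 'z \<Rightarrow> 'k" and i :: 'i
begin

lemma expectation_hist_factor:
  fixes B :: "'x \<times> ('i \<Rightarrow> ('h,'z) hist) \<Rightarrow> real" and h :: "('h,'z) hist"
  assumes fac: "state_factorizes G g \<iota>1 \<iota> i" and t: "t \<in> {1..gm_T G}"
  defines "k \<equiv> compress \<iota>1 \<iota> i h"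
  shows "measure_pmf.expectation (state_dist G g t) (\<lambda>s. indicator {s. snd s i = h} s * B (fst s, others i (snd s))) =
    Pr_hist G g t i h * (measure_pmf.expectation (state_dist G g t)
      (\<lambda>s. indicator {h'. compress \<iota>1 \<iota> i h' = k} (snd s i) * B (fst s, others i (snd s))) / Pr_K G g \<iota>1 \<iota> i t k)"
proof -
  have e1: "(\<lambda>s. indicator {h'. compress \<iota>1 \<iota> i h' = k} (snd s i) * indicator {h} (snd s i) * B (fst s, others i (snd s))) =
      (\<lambda>s. indicator {s. snd s i = h} s * B (fst s, others i (snd s)))"
    by (auto simp: indicator_def k_def fun_eq_iff)
  have e2: "measure_pmf.expectation (state_dist G g t)
      (\<lambda>s. indicator {h'. compress \<iota>1 \<iota> i h' = k} (snd s i) * indicator {h} (snd s i)) = Pr_hist G g t i h"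
    unfolding Pr_hist_def prob_eq_expectation_indicator
    by (intro Bochner_Integration.integral_cong refl) (auto simp: indicator_def k_def)
  show ?thesis
  proof (cases "Pr_K G g \<iota>1 \<iota> i t k = 0")
    case True
    then show ?thesis
      using expectation_K_null[OF True, of "\<lambda>s. indicator {h} (snd s i) * B (fst s, others i (snd s))"]
      unfolding e1[symmetric] by (simp add: mult.assoc)
  next
    case False
    then show ?thesis
      using state_dist_indep[OF fac t, of k "indicator {h}" B]
      unfolding e1 e2 expectation_indicator_K by (simp add: field_simps)
  qed
qed

lemma expectation_reward_event_factor:
  assumes fac: "state_factorizes G g \<iota>1 \<iota> i" and t: "1 \<le> \<tau>" "\<tau> \<le> gm_T G"
  shows "measure_pmf.expectation (run G g) (\<lambda>tr. indicator {tr. rvH tr \<tau> i = h \<and> rvU tr \<tau> i = u} tr * rvR tr \<tau> i) =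
    pmf (g i \<tau> h) u * Pr_hist G g \<tau> i h * reward_given_K G g \<iota>1 \<iota> i \<tau> (compress \<iota>1 \<iota> i h) u"
  using expectation_hist_factor[OF fac, where t=\<tau> and h=h and B="\<lambda>p. reward_kernel G g \<tau> i (fst p) (snd p) u"] t
  unfolding expectation_reward_event[OF t] reward_given_K_def
  by (simp add: reward_kernel_def others_noise_others)

lemma Pr_hist_snoc_factor:
  assumes wf: "wf_game G" and vp: "valid_profile G g" and fac: "state_factorizes G g \<iota>1 \<iota> i"
    and t: "1 \<le> \<tau>" "\<tau> < gm_T G"
  shows "Pr_hist G g (Suc \<tau>) i (snoc_hist h z) =
    pmf (g i \<tau> h) (gm_act G \<tau> i z) * Pr_hist G g \<tau> i h * obs_given_K G g \<iota>1 \<iota> i \<tau> (compress \<iota>1 \<iota> i h) z"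
  using expectation_hist_factor[OF fac, where t=\<tau> and h=h and B="\<lambda>p. obs_kernel G g \<tau> i (fst p) (snd p) (gm_act G \<tau> i z) z"] t
  unfolding Pr_hist_snoc[OF wf vp t] obs_given_K_def
  by (simp add: obs_kernel_def others_noise_others)

lemma given_K_K_based_inv:
  assumes fac: "state_factorizes G g \<iota>1 \<iota> i" and cons: "consistent_with G g \<iota>1 \<iota> i \<rho>" and t: "1 \<le> \<tau>" "\<tau> \<le> gm_T G"
  shows "reward_given_K G (g(i := Kbased \<iota>1 \<iota> i \<rho>)) \<iota>1 \<iota> i \<tau> k u = reward_given_K G g \<iota>1 \<iota> i \<tau> k u"
    and "obs_given_K G (g(i := Kbased \<iota>1 \<iota> i \<rho>)) \<iota>1 \<iota> i \<tau> k z = obs_given_K G g \<iota>1 \<iota> i \<tau> k z"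
proof -
  let ?g' = "g(i := Kbased \<iota>1 \<iota> i \<rho>)"
  have cv: "map_pmf (cview \<iota>1 \<iota> i) (state_dist G ?g' \<tau>) = map_pmf (cview \<iota>1 \<iota> i) (state_dist G g \<tau>)"
    using cview_state_dist_eq[OF fac cons] t by simp
  have via_cview: "measure_pmf.expectation (state_dist G gg \<tau>)
      (\<lambda>s. indicator {h. compress \<iota>1 \<iota> i h = k} (snd s i) * F (fst s) (others i (snd s))) =
    measure_pmf.expectation (map_pmf (cview \<iota>1 \<iota> i) (state_dist G gg \<tau>))
      (\<lambda>p. indicator {k} (snd (snd p)) * F (fst p) (fst (snd p)))"
    for gg :: "('i,'h,'z,'u) profile" and F :: "'x \<Rightarrow> ('i \<Rightarrow> ('h,'z) hist) \<Rightarrow> real"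
    by (simp add: cview_def indicator_def)
  have PK_cview: "Pr_K G gg \<iota>1 \<iota> i \<tau> k =
      measure_pmf.prob (map_pmf (cview \<iota>1 \<iota> i) (state_dist G gg \<tau>)) {p. snd (snd p) = k}"
    for gg :: "('i,'h,'z,'u) profile"
    unfolding Pr_K_def by (simp add: cview_def vimage_def)
  have PK: "Pr_K G ?g' \<iota>1 \<iota> i \<tau> k = Pr_K G g \<iota>1 \<iota> i \<tau> k" unfolding PK_cview cv ..
  have noise: "others_noise G ?g' \<tau> i hs = others_noise G g \<tau> i hs" for hs by (rule others_noise_cong) simp
  have kernels: "reward_kernel G ?g' \<tau> i = reward_kernel G g \<tau> i" "obs_kernel G ?g' \<tau> i = obs_kernel G g \<tau> i"
    unfolding reward_kernel_def obs_kernel_def noise by (rule refl)+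
  show "reward_given_K G ?g' \<iota>1 \<iota> i \<tau> k u = reward_given_K G g \<iota>1 \<iota> i \<tau> k u"
    and "obs_given_K G ?g' \<iota>1 \<iota> i \<tau> k z = obs_given_K G g \<iota>1 \<iota> i \<tau> k z"
    unfolding reward_given_K_def obs_given_K_def PK kernels
      via_cview[where F="\<lambda>x hs. reward_kernel G g \<tau> i x hs u"]
      via_cview[where F="\<lambda>x hs. obs_kernel G g \<tau> i x hs (gm_act G \<tau> i z) z"] cv by simp_all
qed

lemma indicator_event_split:
  assumes wf: "wf_game G" and vp: "valid_profile G g" and tr: "tr \<in> set_pmf (run G g)"
    and t: "1 \<le> \<tau>" "\<tau> < gm_T G"
  shows "indicator {tr. rvH tr \<tau> i = h \<and> rvU tr \<tau> i = u} tr =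
    (\<Sum>z\<in>{z. gm_act G \<tau> i z = u}. \<Sum>u'\<in>UNIV.
       indicator {tr. rvH tr (Suc \<tau>) i = snoc_hist h z \<and> rvU tr (Suc \<tau>) i = u'} tr :: real)"
proof -
  obtain z0 where z0: "gm_act G \<tau> i z0 = rvU tr \<tau> i" "rvH tr (Suc \<tau>) i = snoc_hist (rvH tr \<tau> i) z0"
    using rvH_Suc[OF wf vp tr t, of i] by blast
  have inner: "(\<Sum>u'\<in>UNIV. indicator {tr. rvH tr (Suc \<tau>) i = hh \<and> rvU tr (Suc \<tau>) i = u'} tr :: real) =
      (if rvH tr (Suc \<tau>) i = hh then 1 else 0)" for hh
    by (simp add: indicator_def if_distrib sum.delta cong: if_cong)
  have "(\<Sum>z\<in>{z. gm_act G \<tau> i z = u}. \<Sum>u'\<in>UNIV.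
       indicator {tr. rvH tr (Suc \<tau>) i = snoc_hist h z \<and> rvU tr (Suc \<tau>) i = u'} tr :: real) =
      (\<Sum>z\<in>{z. gm_act G \<tau> i z = u}. if z = z0 then (if rvH tr \<tau> i = h then 1 else 0) else 0)"
    unfolding inner z0 by (intro sum.cong refl) (auto simp: prod_eq_iff)
  also have "\<dots> = indicator {tr. rvH tr \<tau> i = h \<and> rvU tr \<tau> i = u} tr"
    using z0 by (auto simp: indicator_def)
  finally show ?thesis ..
qed

lemma Q_cond_last:
  assumes fac: "state_factorizes G g \<iota>1 \<iota> i" and T: "1 \<le> gm_T G"
    and pos: "Pr G g {tr. rvH tr (gm_T G) i = h \<and> rvU tr (gm_T G) i = u} > 0"
  shows "Q_cond G g i (gm_T G) h u = reward_given_K G g \<iota>1 \<iota> i (gm_T G) (compress \<iota>1 \<iota> i h) u"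
proof -
  have "Q_numer G g i (gm_T G) h u =
      pmf (g i (gm_T G) h) u * Pr_hist G g (gm_T G) i h * reward_given_K G g \<iota>1 \<iota> i (gm_T G) (compress \<iota>1 \<iota> i h) u"
    unfolding Q_numer_def using expectation_reward_event_factor[OF fac T order.refl, of h u] by simp
  then show ?thesis
    unfolding Q_cond_eq_numer Pr_hist_action[OF T order.refl] using pos Pr_hist_action[OF T order.refl]
    by (auto simp: field_simps)
qed

lemma Q_numer_future:
  assumes wf: "wf_game G" and vp: "valid_profile G g" and t: "1 \<le> \<tau>" "\<tau> < gm_T G"
  shows "measure_pmf.expectation (run G g)
      (\<lambda>tr. indicator {tr. rvH tr \<tau> i = h \<and> rvU tr \<tau> i = u} tr * (\<Sum>t\<in>{Suc \<tau>..gm_T G}. rvR tr t i)) =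
    (\<Sum>z\<in>{z. gm_act G \<tau> i z = u}. \<Sum>u'\<in>UNIV. Q_numer G g i (Suc \<tau>) (snoc_hist h z) u')"
proof -
  have "measure_pmf.expectation (run G g)
      (\<lambda>tr. indicator {tr. rvH tr \<tau> i = h \<and> rvU tr \<tau> i = u} tr * (\<Sum>t\<in>{Suc \<tau>..gm_T G}. rvR tr t i)) =
    measure_pmf.expectation (run G g) (\<lambda>tr. \<Sum>z\<in>{z. gm_act G \<tau> i z = u}. \<Sum>u'\<in>UNIV.
      indicator {tr. rvH tr (Suc \<tau>) i = snoc_hist h z \<and> rvU tr (Suc \<tau>) i = u'} tr * (\<Sum>t\<in>{Suc \<tau>..gm_T G}. rvR tr t i))"
    by (rule expectation_cong_pmf) (simp add: indicator_event_split[OF wf vp _ t] sum_distrib_right)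
  also have "\<dots> = (\<Sum>z\<in>{z. gm_act G \<tau> i z = u}. \<Sum>u'\<in>UNIV. Q_numer G g i (Suc \<tau>) (snoc_hist h z) u')"
    unfolding Q_numer_def
    by (subst Bochner_Integration.integral_sum[OF integrable_run], intro sum.cong refl,
        subst Bochner_Integration.integral_sum[OF integrable_run], simp)
  finally show ?thesis .
qed

lemma Q_cond_Bellman:
  fixes h :: "('h,'z) hist"
  assumes wf: "wf_game G" and vp: "valid_profile G g" and fac: "state_factorizes G g \<iota>1 \<iota> i"
    and t: "1 \<le> \<tau>" "\<tau> < gm_T G"
    and pos: "Pr G g {tr. rvH tr \<tau> i = h \<and> rvU tr \<tau> i = u} > 0"
  defines "k \<equiv> compress \<iota>1 \<iota> i h"
  shows "Q_cond G g i \<tau> h u = reward_given_K G g \<iota>1 \<iota> i \<tau> k u +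
     (\<Sum>z\<in>{z. gm_act G \<tau> i z = u}. obs_given_K G g \<iota>1 \<iota> i \<tau> k z * value_cond G g i (Suc \<tau>) (snoc_hist h z))"
proof -
  let ?P = "Pr G g {tr. rvH tr \<tau> i = h \<and> rvU tr \<tau> i = u}"
  have P: "?P = Pr_hist G g \<tau> i h * pmf (g i \<tau> h) u" using Pr_hist_action[of \<tau> G g i h u] t by simp
  have next_numer: "Q_numer G g i (Suc \<tau>) (snoc_hist h z) u' =
      ?P * obs_given_K G g \<iota>1 \<iota> i \<tau> k z * (pmf (g i (Suc \<tau>) (snoc_hist h z)) u' * Q_cond G g i (Suc \<tau>) (snoc_hist h z) u')"
    if "gm_act G \<tau> i z = u" for z u'
    using Pr_hist_action[of "Suc \<tau>" G g i "snoc_hist h z" u'] Pr_hist_snoc_factor[OF wf vp fac t, of h z] t that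
    unfolding Q_numer_eq P k_def by (simp add: mult_ac)
  have "{\<tau>..gm_T G} = insert \<tau> {Suc \<tau>..gm_T G}" using t by auto
  then have "Q_numer G g i \<tau> h u =
      measure_pmf.expectation (run G g) (\<lambda>tr. indicator {tr. rvH tr \<tau> i = h \<and> rvU tr \<tau> i = u} tr * rvR tr \<tau> i) +
      measure_pmf.expectation (run G g)
        (\<lambda>tr. indicator {tr. rvH tr \<tau> i = h \<and> rvU tr \<tau> i = u} tr * (\<Sum>t\<in>{Suc \<tau>..gm_T G}. rvR tr t i))"
    unfolding Q_numer_def by (simp add: distrib_left Bochner_Integration.integral_add[OF integrable_run integrable_run])
  also have "\<dots> = ?P * (reward_given_K G g \<iota>1 \<iota> i \<tau> k u +
      (\<Sum>z\<in>{z. gm_act G \<tau> i z = u}. obs_given_K G g \<iota>1 \<iota> i \<tau> k z * value_cond G g i (Suc \<tau>) (snoc_hist h z)))"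
    unfolding expectation_reward_event_factor[OF fac t(1) less_imp_le[OF t(2)]] Q_numer_future[OF wf vp t]
    by (simp add: next_numer value_cond_def pmf_avg_def P k_def algebra_simps sum_distrib_left)
  finally show ?thesis unfolding Q_cond_eq_numer using pos by simp
qed

end

section \<open>Fully mixed profiles and their limits\<close>

lemma fully_mixed_valid: "fully_mixed G g \<Longrightarrow> valid_profile G g"
  unfolding fully_mixed_def valid_profile_def by auto

lemma set_state_step_mono:
  assumes "\<forall>j. set_pmf (g j t (snd s j)) \<subseteq> set_pmf (g0 j t (snd s j))"
  shows "set_pmf (state_step G g t s) \<subseteq> set_pmf (state_step G g0 t s)"
  unfolding state_step_eq_map set_map_pmf set_pair_pmf set_Pi_pmf_UNIV using assms by (intro image_mono Sigma_mono) auto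

lemma pmf_state_step:
  fixes G :: "('i::finite,'x::finite,'u::finite,'z::finite,'w::finite,'h::finite,'m) game_scheme"
  shows "pmf (state_step G g t s) s' = (\<Sum>u\<in>UNIV. \<Sum>w\<in>UNIV. (\<Prod>j\<in>UNIV. pmf (g j t (snd s j)) (u j)) * pmf (gm_W G t) w *
     indicator {s'} (fst (gm_f G t (fst s) u w), snoc_hists (snd s) (fst (snd (gm_f G t (fst s) u w)))))"
proof -
  define F where "F = (\<lambda>(u,w). (fst (gm_f G t (fst s) u w), snoc_hists (snd s) (fst (snd (gm_f G t (fst s) u w)))))"
  have "pmf (state_step G g t s) s' = measure_pmf.expectation (action_noise G g t s) (indicator (F -` {s'}))"
    unfolding state_step_eq_map pmf_map F_def by simp
  also have "\<dots> = (\<Sum>uw\<in>UNIV \<times> UNIV. indicator (F -` {s'}) uw * pmf (action_noise G g t s) uw)"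
    unfolding UNIV_Times_UNIV by (rule integral_measure_pmf_real) simp_all
  also have "\<dots> = (\<Sum>(u,w)\<in>UNIV \<times> UNIV. (\<Prod>j\<in>UNIV. pmf (g j t (snd s j)) (u j)) * pmf (gm_W G t) w * indicator {s'} (F (u,w)))"
    by (intro sum.cong refl) (auto simp: pmf_pair pmf_Pi indicator_def)
  finally show ?thesis unfolding F_def sum.cartesian_product[symmetric] by simp
qed

context
  fixes G :: "('i::finite,'x::finite,'u::finite,'z::finite,'w::finite,'h::finite,'m) game_scheme"
begin

lemma set_state_dist_mono:
  assumes fm0: "fully_mixed G g0" and vg: "valid_profile G g"
  shows "1 \<le> t \<Longrightarrow> t \<le> gm_T G \<Longrightarrow> set_pmf (state_dist G g t) \<subseteq> set_pmf (state_dist G g0 t)"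
proof (induction t rule: nat_induct_at_least)
  case base then show ?case using state_dist_1[of G g] state_dist_1[of G g0] by simp
next
  case (Suc t)
  have t: "t \<in> {1..gm_T G}" using Suc by auto
  have "set_pmf (state_step G g t s) \<subseteq> set_pmf (state_step G g0 t s)" if s: "s \<in> set_pmf (state_dist G g t)" for s
  proof (rule set_state_step_mono, rule allI)
    fix j
    have "wf_hist t (snd s j)" using wf_hist_state_dist[OF s] Suc by auto
    then show "set_pmf (g j t (snd s j)) \<subseteq> set_pmf (g0 j t (snd s j))"
      using vg fm0 t unfolding valid_profile_def fully_mixed_def by blast
  qed
  then show ?case using Suc by (simp add: state_dist_Suc) blast
qed

lemma set_state_dist_eq:
  assumes "fully_mixed G g0" "fully_mixed G g" "1 \<le> t" "t \<le> gm_T G"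
  shows "set_pmf (state_dist G g t) = set_pmf (state_dist G g0 t)"
  using set_state_dist_mono[OF assms(1) fully_mixed_valid[OF assms(2)]]
    set_state_dist_mono[OF assms(2) fully_mixed_valid[OF assms(1)]] assms(3,4)
  by blast

lemma state_dist_tendsto:
  fixes g0 g :: "('i,'h,'z,'u) profile"
  assumes fm0: "fully_mixed G g0" and vg: "valid_profile G g" and vgs: "\<And>n. valid_profile G (gs n)"
    and conv: "\<And>j t h u. t \<in> {1..gm_T G} \<Longrightarrow> wf_hist t h \<Longrightarrow> (\<lambda>n. pmf (gs n j t h) u) \<longlonglongrightarrow> pmf (g j t h) u"
  shows "1 \<le> t \<Longrightarrow> t \<le> gm_T G \<Longrightarrow> (\<lambda>n. pmf (state_dist G (gs n) t) s) \<longlonglongrightarrow> pmf (state_dist G g t) s"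
proof (induction t arbitrary: s rule: nat_induct_at_least)
  case base then show ?case using state_dist_1[of G g] state_dist_1[of G "gs _"] by simp
next
  case (Suc t s')
  define R where "R = set_pmf (state_dist G g0 t)"
  have t: "t \<in> {1..gm_T G}" using Suc by auto
  have expand: "pmf (state_dist G gg (Suc t)) s' = (\<Sum>s\<in>R. pmf (state_step G gg t s) s' * pmf (state_dist G gg t) s)"
    if "valid_profile G gg" for gg
    unfolding state_dist_Suc[OF Suc.hyps(1)] pmf_bind
    by (rule integral_measure_pmf_real)
       (use finite_state_dist set_state_dist_mono[OF fm0 that, of t] Suc in \<open>auto simp: R_def\<close>)
  have wfR: "s \<in> R \<Longrightarrow> wf_hist t (snd s j)" for s j
    using wf_hist_state_dist[of s G g0 t j] Suc unfolding R_def by auto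
  show ?case
    unfolding expand[OF vgs] expand[OF vg] pmf_state_step
    by (intro tendsto_intros Suc.IH conv[OF t] wfR) (use Suc in auto)
qed

end

text \<open>The law of player \<open>i\<close>'s action given \<open>K\<^sub>t\<^sup>i = k\<close>; where \<open>{K\<^sub>t\<^sup>i = k}\<close> is null it is
  arbitrary, and chosen uniform on \<open>U\<^sub>t\<^sup>i\<close> so that fully mixed profiles stay fully mixed.\<close>
definition cond_action :: "('i::finite,'x,'u,'z,'w,'h,'m) game_scheme \<Rightarrow> ('i \<Rightarrow> 'h \<Rightarrow> 'k)
    \<Rightarrow> (nat \<Rightarrow> 'i \<Rightarrow> 'k \<Rightarrow> 'z \<Rightarrow> 'k) \<Rightarrow> 'i \<Rightarrow> ('i,'h,'z,'u) profile \<Rightarrow> nat \<Rightarrow> 'k \<Rightarrow> 'u pmf" where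
  "cond_action G \<iota>1 \<iota> i g t k = (if Pr_K G g \<iota>1 \<iota> i t k > 0
     then bind_pmf (cond_pmf (state_dist G g t) {s. compress \<iota>1 \<iota> i (snd s i) = k}) (\<lambda>s. g i t (snd s i))
     else pmf_of_set (gm_U G t i))"

definition K_modify :: "('i::finite,'x,'u,'z,'w,'h,'m) game_scheme \<Rightarrow> ('i \<Rightarrow> 'h \<Rightarrow> 'k)
    \<Rightarrow> (nat \<Rightarrow> 'i \<Rightarrow> 'k \<Rightarrow> 'z \<Rightarrow> 'k) \<Rightarrow> 'i \<Rightarrow> ('i,'h,'z,'u) profile \<Rightarrow> ('i,'h,'z,'u) profile" where
  "K_modify G \<iota>1 \<iota> i g = g(i := Kbased \<iota>1 \<iota> i (cond_action G \<iota>1 \<iota> i g))"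

context
  fixes G :: "('i::finite,'x::finite,'u::finite,'z::finite,'w::finite,'h::finite,'m) game_scheme"
    and \<iota>1 :: "'i \<Rightarrow> 'h \<Rightarrow> 'k" and \<iota> :: "nat \<Rightarrow> 'i \<Rightarrow> 'k \<Rightarrow> 'z \<Rightarrow> 'k" and i :: 'i
begin

lemma Pr_K_pos_iff: "Pr_K G g \<iota>1 \<iota> i t k > 0 \<longleftrightarrow> (\<exists>s\<in>set_pmf (state_dist G g t). compress \<iota>1 \<iota> i (snd s i) = k)"
proof
  assume "Pr_K G g \<iota>1 \<iota> i t k > 0"
  then have "set_pmf (state_dist G g t) \<inter> {s. compress \<iota>1 \<iota> i (snd s i) = k} \<noteq> {}"
    unfolding Pr_K_def measure_pmf_zero_iff[symmetric] by simp
  then show "\<exists>s\<in>set_pmf (state_dist G g t). compress \<iota>1 \<iota> i (snd s i) = k" by blast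
qed (auto simp: Pr_K_def intro: measure_pmf_posI)

lemma Pr_K_as_sum:
  assumes "finite R" "set_pmf (state_dist G g t) \<subseteq> R"
  shows "Pr_K G g \<iota>1 \<iota> i t k = (\<Sum>s\<in>R. indicator {h. compress \<iota>1 \<iota> i h = k} (snd s i) * pmf (state_dist G g t) s)"
  unfolding expectation_indicator_K[symmetric] using assms by (intro integral_measure_pmf_real) auto

lemma action_mass_K_as_sum:
  assumes "finite R" "set_pmf (state_dist G g t) \<subseteq> R"
  shows "action_mass_K G g \<iota>1 \<iota> i t k a =
    (\<Sum>s\<in>R. indicator {h. compress \<iota>1 \<iota> i h = k} (snd s i) * pmf (g i t (snd s i)) a * pmf (state_dist G g t) s)"
  unfolding action_mass_K_def using assms by (intro integral_measure_pmf_real) auto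

lemma pmf_cond_action:
  assumes "Pr_K G g \<iota>1 \<iota> i t k > 0"
  shows "pmf (cond_action G \<iota>1 \<iota> i g t k) a * Pr_K G g \<iota>1 \<iota> i t k = action_mass_K G g \<iota>1 \<iota> i t k a"
proof -
  let ?A = "{s. compress \<iota>1 \<iota> i (snd s i) = k}"
  have ne: "set_pmf (state_dist G g t) \<inter> ?A \<noteq> {}" using assms unfolding Pr_K_pos_iff by blast
  have "pmf (cond_action G \<iota>1 \<iota> i g t k) a =
      measure_pmf.expectation (cond_pmf (state_dist G g t) ?A) (\<lambda>s. pmf (g i t (snd s i)) a)"
    unfolding cond_action_def using assms by (simp add: pmf_bind)
  also have "\<dots> = (\<Sum>s\<in>set_pmf (state_dist G g t). pmf (g i t (snd s i)) a * pmf (cond_pmf (state_dist G g t) ?A) s)"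
    by (rule integral_measure_pmf_real[OF finite_state_dist]) (use ne in auto)
  also have "\<dots> = (\<Sum>s\<in>set_pmf (state_dist G g t).
      indicator {h. compress \<iota>1 \<iota> i h = k} (snd s i) * pmf (g i t (snd s i)) a * pmf (state_dist G g t) s) / Pr_K G g \<iota>1 \<iota> i t k"
    unfolding sum_divide_distrib by (intro sum.cong refl) (simp add: pmf_cond[OF ne] Pr_K_def indicator_def)
  finally show ?thesis
    using assms action_mass_K_as_sum[OF finite_state_dist order.refl] by simp
qed

lemma cond_action_consistent: "consistent_with G g \<iota>1 \<iota> i (cond_action G \<iota>1 \<iota> i g)"
  unfolding consistent_with_def using pmf_cond_action by blast

lemma set_cond_action:
  assumes wf: "wf_game G" and fm: "fully_mixed G g" and t: "t \<in> {1..gm_T G}"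
  shows "set_pmf (cond_action G \<iota>1 \<iota> i g t k) = gm_U G t i"
proof (cases "Pr_K G g \<iota>1 \<iota> i t k > 0")
  case True
  have "set_pmf (g i t (snd s i)) = gm_U G t i" if "s \<in> set_pmf (state_dist G g t)" for s
  proof -
    have "wf_hist t (snd s i)" using wf_hist_state_dist[OF that] t by auto
    then show ?thesis using fm t unfolding fully_mixed_def by blast
  qed
  moreover have "set_pmf (state_dist G g t) \<inter> {s. compress \<iota>1 \<iota> i (snd s i) = k} \<noteq> {}"
    using True unfolding Pr_K_pos_iff by blast
  ultimately show ?thesis unfolding cond_action_def using True by auto
next
  case False
  have "gm_U G t i \<noteq> {}" using wf t unfolding wf_game_def by auto
  then show ?thesis unfolding cond_action_def using False by (simp add: set_pmf_of_set)
qed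

lemma fully_mixed_K_modify: "wf_game G \<Longrightarrow> fully_mixed G g \<Longrightarrow> fully_mixed G (K_modify G \<iota>1 \<iota> i g)"
  using set_cond_action unfolding fully_mixed_def K_modify_def Kbased_def by auto

lemma pmf_cond_action_le_sum:
  assumes "finite H" and "\<And>s. s \<in> set_pmf (state_dist G g t) \<Longrightarrow> compress \<iota>1 \<iota> i (snd s i) = k \<Longrightarrow> snd s i \<in> H"
    and pos: "Pr_K G g \<iota>1 \<iota> i t k > 0"
  shows "pmf (cond_action G \<iota>1 \<iota> i g t k) u \<le> (\<Sum>h\<in>H. pmf (g i t h) u)"
proof -
  let ?ik = "\<lambda>s. indicator {h. compress \<iota>1 \<iota> i h = k} (snd s i) :: real"
  define c where "c = (\<Sum>h\<in>H. pmf (g i t h) u)"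
  have "?ik s * pmf (g i t (snd s i)) u * pmf (state_dist G g t) s \<le> ?ik s * c * pmf (state_dist G g t) s"
    if "s \<in> set_pmf (state_dist G g t)" for s
  proof (cases "compress \<iota>1 \<iota> i (snd s i) = k")
    case True
    then have "pmf (g i t (snd s i)) u \<le> c"
      using assms(2)[OF that] unfolding c_def by (intro member_le_sum assms(1)) auto
    then show ?thesis by (intro mult_right_mono) (auto simp: indicator_def)
  qed (simp add: indicator_def)
  then have "action_mass_K G g \<iota>1 \<iota> i t k u \<le>
      (\<Sum>s\<in>set_pmf (state_dist G g t). ?ik s * c * pmf (state_dist G g t) s)"
    unfolding action_mass_K_as_sum[OF finite_state_dist order.refl] by (rule sum_mono)
  also have "\<dots> = c * Pr_K G g \<iota>1 \<iota> i t k"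
    unfolding Pr_K_as_sum[OF finite_state_dist order.refl] sum_distrib_left by (simp add: mult_ac)
  finally have "pmf (cond_action G \<iota>1 \<iota> i g t k) u * Pr_K G g \<iota>1 \<iota> i t k \<le> c * Pr_K G g \<iota>1 \<iota> i t k"
    using pmf_cond_action[OF pos, of u] by simp
  then have "pmf (cond_action G \<iota>1 \<iota> i g t k) u \<le> c" using pos by (simp add: mult_le_cancel_right_pos)
  then show ?thesis unfolding c_def .
qed

lemma consistent_with_limit:
  assumes fm: "\<And>n. fully_mixed G (gs n)" and vg: "valid_profile G g"
    and cvg: "\<And>j t h u. t \<in> {1..gm_T G} \<Longrightarrow> wf_hist t h \<Longrightarrow> (\<lambda>n. pmf (gs n j t h) u) \<longlonglongrightarrow> pmf (g j t h) u"
    and sm: "strict_mono \<phi>"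
    and cv\<rho>: "\<And>t k a. t \<in> {1..gm_T G} \<Longrightarrow> (\<lambda>n. pmf (cond_action G \<iota>1 \<iota> i (gs (\<phi> n)) t k) a) \<longlonglongrightarrow> pmf (\<rho> t k) a"
  shows "consistent_with G g \<iota>1 \<iota> i \<rho>"
  unfolding consistent_with_def
proof (intro ballI allI impI)
  fix t k a assume t: "t \<in> {1..gm_T G}" and P: "Pr_K G g \<iota>1 \<iota> i t k > 0"
  define R where "R = set_pmf (state_dist G (gs 0) t)"
  have fR: "finite R" unfolding R_def by (rule finite_state_dist)
  have supp: "set_pmf (state_dist G gg t) \<subseteq> R" if "valid_profile G gg" for gg
    unfolding R_def using set_state_dist_mono[OF fm that] t by auto
  have Sc: "(\<lambda>n. pmf (state_dist G (gs n) t) s) \<longlonglongrightarrow> pmf (state_dist G g t) s" for s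
    by (rule state_dist_tendsto[OF fm vg fully_mixed_valid[OF fm] cvg]) (use t in auto)
  have wR: "s \<in> R \<Longrightarrow> wf_hist t (snd s i)" for s
    using wf_hist_state_dist[of s G "gs 0" t i] t unfolding R_def by auto
  have cPK: "(\<lambda>n. Pr_K G (gs (\<phi> n)) \<iota>1 \<iota> i t k) \<longlonglongrightarrow> Pr_K G g \<iota>1 \<iota> i t k"
    unfolding Pr_K_as_sum[OF fR supp[OF fully_mixed_valid[OF fm]]] Pr_K_as_sum[OF fR supp[OF vg]]
    by (intro tendsto_intros LIMSEQ_subseq_LIMSEQ[OF Sc sm, unfolded o_def])
  have cAM: "(\<lambda>n. action_mass_K G (gs (\<phi> n)) \<iota>1 \<iota> i t k a) \<longlonglongrightarrow> action_mass_K G g \<iota>1 \<iota> i t k a"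
    unfolding action_mass_K_as_sum[OF fR supp[OF fully_mixed_valid[OF fm]]] action_mass_K_as_sum[OF fR supp[OF vg]]
    by (intro tendsto_intros LIMSEQ_subseq_LIMSEQ[OF Sc sm, unfolded o_def]
        LIMSEQ_subseq_LIMSEQ[OF cvg[OF t wR] sm, unfolded o_def])
  have "Pr_K G (gs n) \<iota>1 \<iota> i t k > 0" for n
    using P set_state_dist_mono[OF fm vg] t unfolding Pr_K_pos_iff by fastforce
  then have "pmf (cond_action G \<iota>1 \<iota> i (gs (\<phi> n)) t k) a * Pr_K G (gs (\<phi> n)) \<iota>1 \<iota> i t k =
      action_mass_K G (gs (\<phi> n)) \<iota>1 \<iota> i t k a" for n
    by (rule pmf_cond_action)
  then have "(\<lambda>n. action_mass_K G (gs (\<phi> n)) \<iota>1 \<iota> i t k a) \<longlonglongrightarrow> pmf (\<rho> t k) a * Pr_K G g \<iota>1 \<iota> i t k"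
    using tendsto_mult[OF cv\<rho>[OF t, of k a] cPK] by simp
  with cAM show "pmf (\<rho> t k) a * Pr_K G g \<iota>1 \<iota> i t k = action_mass_K G g \<iota>1 \<iota> i t k a"
    using LIMSEQ_unique by blast
qed

end

section \<open>The limit of the modified profiles\<close>

locale SE_approximation =
  fixes G :: "('i::finite,'x::finite,'u::finite,'z::finite,'w::finite,'h::finite,'m) game_scheme"
    and \<iota>1 :: "'i \<Rightarrow> 'h \<Rightarrow> 'k" and \<iota> :: "nat \<Rightarrow> 'i \<Rightarrow> 'k \<Rightarrow> 'z \<Rightarrow> 'k" and i :: 'i
    and g :: "('i,'h,'z,'u) profile" and Q :: "'i \<Rightarrow> nat \<Rightarrow> ('h,'z) hist \<Rightarrow> 'u \<Rightarrow> real"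
    and gs :: "nat \<Rightarrow> ('i,'h,'z,'u) profile" and Qs :: "nat \<Rightarrow> 'i \<Rightarrow> nat \<Rightarrow> ('h,'z) hist \<Rightarrow> 'u \<Rightarrow> real"
    and \<phi> :: "nat \<Rightarrow> nat" and \<rho> :: "nat \<Rightarrow> 'k \<Rightarrow> 'u pmf"
  assumes wf: "wf_game G"
    and factorizes: "\<And>g'. valid_profile G g' \<Longrightarrow> state_factorizes G g' \<iota>1 \<iota> i"
    and fully_mixed_gs: "\<And>n. fully_mixed G (gs n)"
    and Q_of_gs: "\<And>n. Q_of G (gs n) (Qs n)"
    and gs_tendsto: "\<And>j t h u. t \<in> {1..gm_T G} \<Longrightarrow> wf_hist t h \<Longrightarrow> (\<lambda>n. pmf (gs n j t h) u) \<longlonglongrightarrow> pmf (g j t h) u"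
    and Qs_tendsto: "\<And>j t h u. t \<in> {1..gm_T G} \<Longrightarrow> wf_hist t h \<Longrightarrow> u \<in> gm_U G t j \<Longrightarrow>
      (\<lambda>n. Qs n j t h u) \<longlonglongrightarrow> Q j t h u"
    and seq_rational: "seq_rational G g Q"
    and subseq: "strict_mono \<phi>"
    and cond_action_tendsto: "\<And>t k a. t \<in> {1..gm_T G} \<Longrightarrow>
      (\<lambda>n. pmf (cond_action G \<iota>1 \<iota> i (gs (\<phi> n)) t k) a) \<longlonglongrightarrow> pmf (\<rho> t k) a"
begin

text \<open>All fully mixed profiles have the same support, so \<open>gs 0\<close> is as good as any.\<close>
abbreviation reachable :: "nat \<Rightarrow> 'i \<Rightarrow> ('h,'z) hist \<Rightarrow> bool" where
  "reachable \<tau> j h \<equiv> Pr_hist G (gs 0) \<tau> j h > 0"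

abbreviation g_mod :: "nat \<Rightarrow> ('i,'h,'z,'u) profile" where
  "g_mod n \<equiv> K_modify G \<iota>1 \<iota> i (gs (\<phi> n))"

lemma valid_g: "valid_profile G g"
  using seq_rational unfolding seq_rational_def valid_profile_def by blast

lemma valid_gs: "valid_profile G (gs n)"
  by (rule fully_mixed_valid[OF fully_mixed_gs])

lemma fully_mixed_g_mod: "fully_mixed G (g_mod n)"
  by (rule fully_mixed_K_modify[OF wf fully_mixed_gs])

lemma valid_g_mod: "valid_profile G (g_mod n)"
  by (rule fully_mixed_valid[OF fully_mixed_g_mod])

lemma gs_subseq_tendsto:
  "t \<in> {1..gm_T G} \<Longrightarrow> wf_hist t h \<Longrightarrow> (\<lambda>n. pmf (gs (\<phi> n) j t h) u) \<longlonglongrightarrow> pmf (g j t h) u"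
  using LIMSEQ_subseq_LIMSEQ[OF gs_tendsto subseq] by (simp add: o_def)

lemma reachable_iff:
  assumes "fully_mixed G gg" "\<tau> \<in> {1..gm_T G}"
  shows "Pr_hist G gg \<tau> j h > 0 \<longleftrightarrow> reachable \<tau> j h"
proof -
  have "Pr_hist G gg' \<tau> j h > 0 \<longleftrightarrow> set_pmf (state_dist G gg' \<tau>) \<inter> {s. snd s j = h} \<noteq> {}" for gg'
    unfolding Pr_hist_def measure_pmf_zero_iff[symmetric] by (simp add: order_less_le)
  then show ?thesis using set_state_dist_eq[OF fully_mixed_gs assms(1)] assms(2) by simp
qed

lemma reachable_wf_hist: "reachable \<tau> j h \<Longrightarrow> 1 \<le> \<tau> \<Longrightarrow> wf_hist \<tau> h"
  unfolding Pr_hist_def using measure_pmf_zero_iff[of "state_dist G (gs 0) \<tau>" "{s. snd s j = h}"] wf_hist_state_dist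
  by (metis (mono_tags, lifting) disjoint_iff mem_Collect_eq order_less_irrefl)

lemma Pr_hist_action_pos:
  assumes "fully_mixed G gg" "\<tau> \<in> {1..gm_T G}" "reachable \<tau> j h" "u \<in> gm_U G \<tau> j"
  shows "Pr G gg {tr. rvH tr \<tau> j = h \<and> rvU tr \<tau> j = u} > 0"
proof -
  have "wf_hist \<tau> h" using reachable_wf_hist assms(2,3) by auto
  then have "u \<in> set_pmf (gg j \<tau> h)" using assms(1,2,4) unfolding fully_mixed_def by blast
  then show ?thesis
    using reachable_iff[OF assms(1,2)] assms(2,3) Pr_hist_action[of \<tau> G gg j h u] by (simp add: pmf_positive)
qed

lemma Q_cond_unreachable:
  assumes "fully_mixed G gg" "\<tau> \<in> {1..gm_T G}" "\<not> reachable \<tau> j h"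
  shows "Q_cond G gg j \<tau> h u = 0"
proof -
  have "Pr_hist G gg \<tau> j h = 0"
    using reachable_iff[OF assms(1,2)] assms(3) unfolding Pr_hist_def by (simp add: order_less_le)
  then show ?thesis using Pr_hist_action[of \<tau> G gg j h u] assms(2) unfolding Q_cond_eq_numer by simp
qed

lemma Q_cond_tendsto:
  assumes "\<tau> \<in> {1..gm_T G}" "reachable \<tau> j h" "u \<in> gm_U G \<tau> j"
  shows "(\<lambda>n. Q_cond G (gs (\<phi> n)) j \<tau> h u) \<longlonglongrightarrow> Q j \<tau> h u"
proof -
  have "Qs n j \<tau> h u = Q_cond G (gs n) j \<tau> h u" for n
    using Q_of_gs[of n] Pr_hist_action_pos[OF fully_mixed_gs assms] assms(1) unfolding Q_of_def Q_cond_def by blast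
  moreover have "wf_hist \<tau> h" using reachable_wf_hist assms(1,2) by auto
  then have "(\<lambda>n. Qs (\<phi> n) j \<tau> h u) \<longlonglongrightarrow> Q j \<tau> h u"
    using LIMSEQ_subseq_LIMSEQ[OF Qs_tendsto[OF assms(1) _ assms(3)] subseq] by (simp add: o_def)
  ultimately show ?thesis by simp
qed

lemma pmf_rho_outside:
  assumes "t \<in> {1..gm_T G}" "u \<notin> gm_U G t i"
  shows "pmf (\<rho> t k) u = 0"
proof -
  have "pmf (cond_action G \<iota>1 \<iota> i (gs (\<phi> n)) t k) u = 0" for n
    using set_cond_action[of G "gs (\<phi> n)" t \<iota>1 \<iota> i k, OF wf fully_mixed_gs assms(1)] assms(2)
    by (simp add: pmf_eq_0_set_pmf)
  then have "(\<lambda>n. 0) \<longlonglongrightarrow> pmf (\<rho> t k) u" using cond_action_tendsto[OF assms(1), of k u] by simp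
  then show ?thesis using LIMSEQ_const_iff by metis
qed

lemma set_rho:
  assumes "t \<in> {1..gm_T G}"
  shows "set_pmf (\<rho> t k) \<subseteq> gm_U G t i"
proof
  fix u assume "u \<in> set_pmf (\<rho> t k)"
  then show "u \<in> gm_U G t i" using pmf_rho_outside[OF assms, of u k] by (metis pmf_eq_0_set_pmf)
qed

lemma rho_consistent: "consistent_with G g \<iota>1 \<iota> i \<rho>"
  by (rule consistent_with_limit[OF fully_mixed_gs valid_g gs_tendsto subseq cond_action_tendsto])

lemma obs_given_K_bound: "\<bar>obs_given_K G gg \<iota>1 \<iota> i \<tau> k z\<bar> \<le> 1"
proof -
  let ?ik = "\<lambda>s. indicator {h. compress \<iota>1 \<iota> i h = k} (snd s i) :: real"
  let ?N = "measure_pmf.expectation (state_dist G gg \<tau>)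
      (\<lambda>s. ?ik s * obs_kernel G gg \<tau> i (fst s) (others i (snd s)) (gm_act G \<tau> i z) z)"
  have "0 \<le> ?N" by (intro Bochner_Integration.integral_nonneg) (simp add: obs_kernel_bounds)
  moreover have "?N \<le> Pr_K G gg \<iota>1 \<iota> i \<tau> k"
    unfolding expectation_indicator_K[symmetric]
    by (intro Bochner_Integration.integral_mono integrable_measure_pmf_finite[OF finite_state_dist])
       (simp add: obs_kernel_bounds indicator_def)
  ultimately show ?thesis
    unfolding obs_given_K_def by (cases "Pr_K G gg \<iota>1 \<iota> i \<tau> k = 0") (auto simp: abs_le_iff divide_le_eq_1)
qed

lemma obs_given_K_unreachable:
  assumes t: "1 \<le> \<tau>" "\<tau> < gm_T G" and r: "reachable \<tau> i h" and u: "gm_act G \<tau> i z \<in> gm_U G \<tau> i"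
    and nr: "\<not> reachable (Suc \<tau>) i (snoc_hist h z)"
  shows "obs_given_K G (gs n) \<iota>1 \<iota> i \<tau> (compress \<iota>1 \<iota> i h) z = 0"
proof -
  have t1: "\<tau> \<in> {1..gm_T G}" "Suc \<tau> \<in> {1..gm_T G}" using t by auto
  have "\<not> Pr_hist G (gs n) (Suc \<tau>) i (snoc_hist h z) > 0"
    using reachable_iff[OF fully_mixed_gs t1(2)] nr by blast
  moreover have "Pr_hist G (gs n) (Suc \<tau>) i (snoc_hist h z) \<ge> 0" unfolding Pr_hist_def by simp
  ultimately have "Pr_hist G (gs n) (Suc \<tau>) i (snoc_hist h z) = 0" by linarith
  moreover have "Pr_hist G (gs n) \<tau> i h > 0" using reachable_iff[OF fully_mixed_gs t1(1)] r by blast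
  moreover have "wf_hist \<tau> h" using reachable_wf_hist[OF r] t by simp
  then have "gm_act G \<tau> i z \<in> set_pmf (gs n i \<tau> h)"
    using fully_mixed_gs[of n] t1(1) u unfolding fully_mixed_def by blast
  ultimately show ?thesis
    using Pr_hist_snoc_factor[OF wf valid_gs factorizes[OF valid_gs] t, where h=h and z=z] by (simp add: set_pmf_iff)
qed

lemma value_cond_tendsto:
  assumes t: "t \<in> {1..gm_T G}" and r: "reachable t i h"
  shows "(\<lambda>n. value_cond G (gs (\<phi> n)) i t h) \<longlonglongrightarrow> pmf_avg (g i t h) (Q i t h)"
  unfolding value_cond_def pmf_avg_def
proof (intro tendsto_sum)
  fix u :: 'u
  have w: "wf_hist t h" using reachable_wf_hist r t by auto
  show "(\<lambda>n. pmf (gs (\<phi> n) i t h) u * Q_cond G (gs (\<phi> n)) i t h u) \<longlonglongrightarrow> pmf (g i t h) u * Q i t h u"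
  proof (cases "u \<in> gm_U G t i")
    case True
    then show ?thesis using gs_subseq_tendsto[OF t w] Q_cond_tendsto[OF t r] by (intro tendsto_mult)
  next
    case False
    then have "u \<notin> set_pmf (gs n i t h)" "u \<notin> set_pmf (g i t h)" for n
      using fully_mixed_gs[of n] valid_profile_action[OF valid_g t w] t w unfolding fully_mixed_def by blast+
    then show ?thesis by (simp add: set_pmf_iff)
  qed
qed

lemma value_cond_g_mod_tendsto:
  assumes t: "t \<in> {1..gm_T G}"
    and Q_mod: "\<And>u. u \<in> gm_U G t i \<Longrightarrow> (\<lambda>n. Q_cond G (g_mod n) i t h u) \<longlonglongrightarrow> Q i t h u"
  shows "(\<lambda>n. value_cond G (g_mod n) i t h) \<longlonglongrightarrow> pmf_avg (\<rho> t (compress \<iota>1 \<iota> i h)) (Q i t h)"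
  unfolding value_cond_def pmf_avg_def
proof (intro tendsto_sum)
  fix u :: 'u
  have "g_mod n i t h = cond_action G \<iota>1 \<iota> i (gs (\<phi> n)) t (compress \<iota>1 \<iota> i h)" for n
    unfolding K_modify_def Kbased_def by simp
  moreover have "pmf (cond_action G \<iota>1 \<iota> i (gs (\<phi> n)) t k) u = 0" "pmf (\<rho> t k) u = 0"
    if "u \<notin> gm_U G t i" for n k
    using set_cond_action[of G "gs (\<phi> n)" t \<iota>1 \<iota> i k, OF wf fully_mixed_gs t] pmf_rho_outside[OF t that] that
    by (auto simp: pmf_eq_0_set_pmf)
  ultimately show "(\<lambda>n. pmf (g_mod n i t h) u * Q_cond G (g_mod n) i t h u) \<longlonglongrightarrow>
      pmf (\<rho> t (compress \<iota>1 \<iota> i h)) u * Q i t h u"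
    using cond_action_tendsto[OF t] Q_mod by (cases "u \<in> gm_U G t i") (auto intro: tendsto_mult)
qed

definition K_hists :: "nat \<Rightarrow> 'k \<Rightarrow> ('h,'z) hist set" where
  "K_hists \<tau> k = (\<lambda>s. snd s i) ` (set_pmf (state_dist G (gs 0) \<tau>) \<inter> {s. compress \<iota>1 \<iota> i (snd s i) = k})"

lemma K_hists:
  assumes "h' \<in> K_hists \<tau> k" "\<tau> \<in> {1..gm_T G}"
  shows "reachable \<tau> i h'" "compress \<iota>1 \<iota> i h' = k" "wf_hist \<tau> h'"
proof -
  obtain s where s: "s \<in> set_pmf (state_dist G (gs 0) \<tau>)" "compress \<iota>1 \<iota> i (snd s i) = k" "h' = snd s i"
    using assms(1) unfolding K_hists_def by auto
  then show "reachable \<tau> i h'" unfolding Pr_hist_def by (auto intro: measure_pmf_posI)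
  show "compress \<iota>1 \<iota> i h' = k" using s by simp
  show "wf_hist \<tau> h'" using wf_hist_state_dist[OF s(1)] s(3) assms(2) by auto
qed

lemma pmf_cond_action_le_K_hists:
  assumes t: "\<tau> \<in> {1..gm_T G}" and r: "reachable \<tau> i h"
  shows "pmf (cond_action G \<iota>1 \<iota> i (gs n) \<tau> (compress \<iota>1 \<iota> i h)) u \<le>
    (\<Sum>h'\<in>K_hists \<tau> (compress \<iota>1 \<iota> i h). pmf (gs n i \<tau> h') u)"
proof (rule pmf_cond_action_le_sum)
  show "finite (K_hists \<tau> (compress \<iota>1 \<iota> i h))" unfolding K_hists_def using finite_state_dist[of G "gs 0" \<tau>] by auto
  show "snd s i \<in> K_hists \<tau> (compress \<iota>1 \<iota> i h)"
    if "s \<in> set_pmf (state_dist G (gs n) \<tau>)" "compress \<iota>1 \<iota> i (snd s i) = compress \<iota>1 \<iota> i h" for s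
  proof -
    have "s \<in> set_pmf (state_dist G (gs 0) \<tau>)"
      using that(1) set_state_dist_eq[OF fully_mixed_gs[of 0] fully_mixed_gs[of n]] t by auto
    then show ?thesis using that(2) unfolding K_hists_def by blast
  qed
  have "Pr_hist G (gs n) \<tau> i h \<le> Pr_K G (gs n) \<iota>1 \<iota> i \<tau> (compress \<iota>1 \<iota> i h)"
    unfolding Pr_hist_def Pr_K_def by (intro measure_pmf.finite_measure_mono) auto
  moreover have "Pr_hist G (gs n) \<tau> i h > 0" using reachable_iff[OF fully_mixed_gs[of n] t] r by blast
  ultimately show "Pr_K G (gs n) \<iota>1 \<iota> i \<tau> (compress \<iota>1 \<iota> i h) > 0" by linarith
qed

definition Q_compressible :: "nat \<Rightarrow> bool" where
  "Q_compressible \<tau> \<longleftrightarrow> (\<forall>h h'. reachable \<tau> i h \<longrightarrow> reachable \<tau> i h' \<longrightarrow>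
     compress \<iota>1 \<iota> i h' = compress \<iota>1 \<iota> i h \<longrightarrow> (\<forall>u\<in>gm_U G \<tau> i. Q i \<tau> h' u = Q i \<tau> h u))"

lemma set_rho_optimal:
  assumes t: "\<tau> \<in> {1..gm_T G}" and r: "reachable \<tau> i h" and comp: "Q_compressible \<tau>"
  shows "set_pmf (\<rho> \<tau> (compress \<iota>1 \<iota> i h)) \<subseteq> {u \<in> gm_U G \<tau> i. \<forall>u'\<in>gm_U G \<tau> i. Q i \<tau> h u' \<le> Q i \<tau> h u}"
proof
  fix u assume u: "u \<in> set_pmf (\<rho> \<tau> (compress \<iota>1 \<iota> i h))"
  show "u \<in> {u \<in> gm_U G \<tau> i. \<forall>u'\<in>gm_U G \<tau> i. Q i \<tau> h u' \<le> Q i \<tau> h u}"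
  proof (rule ccontr)
    assume nopt: "u \<notin> {u \<in> gm_U G \<tau> i. \<forall>u'\<in>gm_U G \<tau> i. Q i \<tau> h u' \<le> Q i \<tau> h u}"
    let ?H = "K_hists \<tau> (compress \<iota>1 \<iota> i h)"
    have "pmf (g i \<tau> h') u = 0" if "h' \<in> ?H" for h'
    proof -
      note h' = K_hists[OF that t]
      have "\<forall>u\<in>gm_U G \<tau> i. Q i \<tau> h' u = Q i \<tau> h u"
        using comp h'(1,2) r unfolding Q_compressible_def by blast
      then have "{u \<in> gm_U G \<tau> i. \<forall>u'\<in>gm_U G \<tau> i. Q i \<tau> h' u' \<le> Q i \<tau> h' u} =
          {u \<in> gm_U G \<tau> i. \<forall>u'\<in>gm_U G \<tau> i. Q i \<tau> h u' \<le> Q i \<tau> h u}"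
        by auto
      moreover have "set_pmf (g i \<tau> h') \<subseteq> {u \<in> gm_U G \<tau> i. \<forall>u'\<in>gm_U G \<tau> i. Q i \<tau> h' u' \<le> Q i \<tau> h' u}"
        using seq_rational t h'(3) unfolding seq_rational_def by blast
      ultimately have "u \<notin> set_pmf (g i \<tau> h')" using nopt by blast
      then show ?thesis by (simp add: pmf_eq_0_set_pmf)
    qed
    moreover have "(\<lambda>n. \<Sum>h'\<in>?H. pmf (gs (\<phi> n) i \<tau> h') u) \<longlonglongrightarrow> (\<Sum>h'\<in>?H. pmf (g i \<tau> h') u)"
      by (intro tendsto_sum gs_subseq_tendsto[OF t] K_hists(3)[OF _ t])
    ultimately have sum0: "(\<lambda>n. \<Sum>h'\<in>?H. pmf (gs (\<phi> n) i \<tau> h') u) \<longlonglongrightarrow> 0" by simp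
    have "(\<lambda>n. pmf (cond_action G \<iota>1 \<iota> i (gs (\<phi> n)) \<tau> (compress \<iota>1 \<iota> i h)) u) \<longlonglongrightarrow> 0"
      by (rule tendsto_sandwich[OF _ _ tendsto_const sum0])
         (auto intro!: always_eventually pmf_cond_action_le_K_hists[OF t r])
    then have "pmf (\<rho> \<tau> (compress \<iota>1 \<iota> i h)) u = 0"
      using cond_action_tendsto[OF t] LIMSEQ_unique by blast
    then show False using u by (simp add: set_pmf_iff)
  qed
qed

lemma pmf_avg_optimal:
  assumes t: "t \<in> {1..gm_T G}" and w: "wf_hist t h"
    and p: "set_pmf p \<subseteq> {u \<in> gm_U G t i. \<forall>u'\<in>gm_U G t i. Q i t h u' \<le> Q i t h u}"
  shows "pmf_avg p (Q i t h) = pmf_avg (g i t h) (Q i t h)"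
proof -
  have sg: "set_pmf (g i t h) \<subseteq> {u \<in> gm_U G t i. \<forall>u'\<in>gm_U G t i. Q i t h u' \<le> Q i t h u}"
    using seq_rational t w unfolding seq_rational_def by blast
  obtain u0 where "u0 \<in> set_pmf (g i t h)" using set_pmf_not_empty[of "g i t h"] by blast
  with sg have "u0 \<in> {u \<in> gm_U G t i. \<forall>u'\<in>gm_U G t i. Q i t h u' \<le> Q i t h u}" by blast
  then show ?thesis by (simp only: pmf_avg_argmax[OF p] pmf_avg_argmax[OF sg])
qed

lemma pmf_avg_g_eq:
  assumes t: "t \<in> {1..gm_T G}" and r: "reachable t i h" "reachable t i h'"
    and eq: "\<forall>u\<in>gm_U G t i. Q i t h' u = Q i t h u"
  shows "pmf_avg (g i t h') (Q i t h') = pmf_avg (g i t h) (Q i t h)"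
proof -
  have w: "wf_hist t h" "wf_hist t h'" using reachable_wf_hist r t by auto
  have "set_pmf (g i t h') \<subseteq> {u \<in> gm_U G t i. \<forall>u'\<in>gm_U G t i. Q i t h' u' \<le> Q i t h' u}"
    using seq_rational t w(2) unfolding seq_rational_def by blast
  also have "\<dots> = {u \<in> gm_U G t i. \<forall>u'\<in>gm_U G t i. Q i t h u' \<le> Q i t h u}" using eq by auto
  finally have opt: "set_pmf (g i t h') \<subseteq> \<dots>" .
  have "pmf_avg (g i t h') (Q i t h') = pmf_avg (g i t h') (Q i t h)"
    using eq valid_profile_action[OF valid_g t w(2)] by (intro pmf_avg_cong[where U="gm_U G t i"]) auto
  also have "\<dots> = pmf_avg (g i t h) (Q i t h)" by (rule pmf_avg_optimal[OF t w(1) opt])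
  finally show ?thesis .
qed

end
section \<open>Backward induction\<close>

context SE_approximation
begin

lemma Q_compressible_last:
  assumes T: "1 \<le> gm_T G"
  shows "Q_compressible (gm_T G)"
  unfolding Q_compressible_def
proof (intro allI impI ballI)
  fix h h' u assume r: "reachable (gm_T G) i h" and r': "reachable (gm_T G) i h'"
    and c: "compress \<iota>1 \<iota> i h' = compress \<iota>1 \<iota> i h" and u: "u \<in> gm_U G (gm_T G) i"
  have t: "gm_T G \<in> {1..gm_T G}" using T by auto
  have "Q_cond G (gs n) i (gm_T G) h' u = Q_cond G (gs n) i (gm_T G) h u" for n
    using Q_cond_last[OF factorizes[OF valid_gs] T Pr_hist_action_pos[OF fully_mixed_gs t r u]]
      Q_cond_last[OF factorizes[OF valid_gs] T Pr_hist_action_pos[OF fully_mixed_gs t r' u]] c by simp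
  then show "Q i (gm_T G) h' u = Q i (gm_T G) h u"
    using Q_cond_tendsto[OF t r u] Q_cond_tendsto[OF t r' u] LIMSEQ_unique by simp
qed

text \<open>In the Bellman recursions below, each continuation \<open>z\<close> either has a limiting value that
  depends on the history only through its compression, or is never observed.\<close>

lemma continuation_compress:
  assumes t: "1 \<le> \<tau>" "\<tau> < gm_T G" and IH: "Q_compressible (Suc \<tau>)"
    and r: "reachable \<tau> i h" and r': "reachable \<tau> i h'" and c: "compress \<iota>1 \<iota> i h' = compress \<iota>1 \<iota> i h"
    and z: "gm_act G \<tau> i z = u" and u: "u \<in> gm_U G \<tau> i"
  shows "(\<forall>n. obs_given_K G (gs (\<phi> n)) \<iota>1 \<iota> i \<tau> (compress \<iota>1 \<iota> i h) z = 0) \<or>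
    (\<lambda>n. value_cond G (gs (\<phi> n)) i (Suc \<tau>) (snoc_hist h' z) -
         value_cond G (gs (\<phi> n)) i (Suc \<tau>) (snoc_hist h z)) \<longlonglongrightarrow> 0"
proof (cases "reachable (Suc \<tau>) i (snoc_hist h z) \<and> reachable (Suc \<tau>) i (snoc_hist h' z)")
  case True
  have t2: "Suc \<tau> \<in> {1..gm_T G}" using t by auto
  have "compress \<iota>1 \<iota> i (snoc_hist hh z) = \<iota> (Suc \<tau>) i (compress \<iota>1 \<iota> i hh) z" if "reachable \<tau> i hh" for hh
    using compress_snoc[of hh \<tau>] reachable_wf_hist[OF that t(1)] t(1) unfolding wf_hist_def by simp
  then have "compress \<iota>1 \<iota> i (snoc_hist h' z) = compress \<iota>1 \<iota> i (snoc_hist h z)" using c r r' by simp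
  then have "\<forall>u'\<in>gm_U G (Suc \<tau>) i. Q i (Suc \<tau>) (snoc_hist h' z) u' = Q i (Suc \<tau>) (snoc_hist h z) u'"
    using IH True unfolding Q_compressible_def by blast
  then have "pmf_avg (g i (Suc \<tau>) (snoc_hist h' z)) (Q i (Suc \<tau>) (snoc_hist h' z)) =
      pmf_avg (g i (Suc \<tau>) (snoc_hist h z)) (Q i (Suc \<tau>) (snoc_hist h z))"
    using pmf_avg_g_eq[OF t2] True by blast
  moreover have "(\<lambda>n. value_cond G (gs (\<phi> n)) i (Suc \<tau>) (snoc_hist h' z) -
        value_cond G (gs (\<phi> n)) i (Suc \<tau>) (snoc_hist h z)) \<longlonglongrightarrow>
      pmf_avg (g i (Suc \<tau>) (snoc_hist h' z)) (Q i (Suc \<tau>) (snoc_hist h' z)) -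
      pmf_avg (g i (Suc \<tau>) (snoc_hist h z)) (Q i (Suc \<tau>) (snoc_hist h z))"
    using True by (intro tendsto_diff value_cond_tendsto[OF t2]) auto
  ultimately show ?thesis by simp
next
  case False
  then show ?thesis using obs_given_K_unreachable[OF t r] obs_given_K_unreachable[OF t r'] c z u by auto
qed

lemma Q_compressible_step:
  assumes t: "1 \<le> \<tau>" "\<tau> < gm_T G" and IH: "Q_compressible (Suc \<tau>)"
  shows "Q_compressible \<tau>"
  unfolding Q_compressible_def
proof (intro allI impI ballI)
  fix h h' u assume r: "reachable \<tau> i h" and r': "reachable \<tau> i h'"
    and c: "compress \<iota>1 \<iota> i h' = compress \<iota>1 \<iota> i h" and u: "u \<in> gm_U G \<tau> i"
  have t1: "\<tau> \<in> {1..gm_T G}" using t by auto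
  let ?k = "compress \<iota>1 \<iota> i h" and ?Z = "{z. gm_act G \<tau> i z = u}"
  let ?V = "\<lambda>n hh z. value_cond G (gs (\<phi> n)) i (Suc \<tau>) (snoc_hist hh z)"
  have Bellman: "Q_cond G (gs n) i \<tau> hh u = reward_given_K G (gs n) \<iota>1 \<iota> i \<tau> ?k u +
      (\<Sum>z\<in>?Z. obs_given_K G (gs n) \<iota>1 \<iota> i \<tau> ?k z * value_cond G (gs n) i (Suc \<tau>) (snoc_hist hh z))"
    if "reachable \<tau> i hh" "compress \<iota>1 \<iota> i hh = ?k" for n hh
    using Q_cond_Bellman[OF wf valid_gs factorizes[OF valid_gs] t Pr_hist_action_pos[OF fully_mixed_gs t1 that(1) u]]
    unfolding that(2) .
  have "(\<lambda>n. \<Sum>z\<in>?Z. obs_given_K G (gs (\<phi> n)) \<iota>1 \<iota> i \<tau> ?k z * (?V n h' z - ?V n h z)) \<longlonglongrightarrow> 0"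
    using continuation_compress[OF t IH r r' c _ u]
    by (intro sum_weighted_tendsto_zero[OF finite obs_given_K_bound]) simp
  moreover have "Q_cond G (gs (\<phi> n)) i \<tau> h' u - Q_cond G (gs (\<phi> n)) i \<tau> h u =
      (\<Sum>z\<in>?Z. obs_given_K G (gs (\<phi> n)) \<iota>1 \<iota> i \<tau> ?k z * (?V n h' z - ?V n h z))" for n
    using Bellman[OF r refl] Bellman[OF r' c] by (simp add: sum_subtractf right_diff_distrib)
  ultimately have "(\<lambda>n. Q_cond G (gs (\<phi> n)) i \<tau> h' u - Q_cond G (gs (\<phi> n)) i \<tau> h u) \<longlonglongrightarrow> 0" by simp
  from tendsto_add[OF this Q_cond_tendsto[OF t1 r u]]
  have "(\<lambda>n. Q_cond G (gs (\<phi> n)) i \<tau> h' u) \<longlonglongrightarrow> Q i \<tau> h u" by simp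
  then show "Q i \<tau> h' u = Q i \<tau> h u" using Q_cond_tendsto[OF t1 r' u] LIMSEQ_unique by blast
qed

lemma Q_compressible:
  assumes "\<tau> \<in> {1..gm_T G}"
  shows "Q_compressible \<tau>"
proof -
  have "\<tau> \<le> gm_T G" "1 \<le> \<tau>" using assms by auto
  then show ?thesis
  proof (induction \<tau> rule: inc_induct)
    case base then show ?case using Q_compressible_last by simp
  next
    case (step m) then show ?case using Q_compressible_step by simp
  qed
qed

lemma given_K_g_mod:
  assumes "1 \<le> \<tau>" "\<tau> \<le> gm_T G"
  shows "reward_given_K G (g_mod n) \<iota>1 \<iota> i \<tau> k u = reward_given_K G (gs (\<phi> n)) \<iota>1 \<iota> i \<tau> k u"
    and "obs_given_K G (g_mod n) \<iota>1 \<iota> i \<tau> k z = obs_given_K G (gs (\<phi> n)) \<iota>1 \<iota> i \<tau> k z"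
  unfolding K_modify_def
  by (rule given_K_K_based_inv[OF factorizes[OF valid_gs] cond_action_consistent assms])+

definition Q_mod_tendsto :: "nat \<Rightarrow> bool" where
  "Q_mod_tendsto \<tau> \<longleftrightarrow> (\<forall>h. reachable \<tau> i h \<longrightarrow>
     (\<forall>u\<in>gm_U G \<tau> i. (\<lambda>n. Q_cond G (g_mod n) i \<tau> h u) \<longlonglongrightarrow> Q i \<tau> h u))"

lemma Q_mod_tendsto_last:
  assumes T: "1 \<le> gm_T G"
  shows "Q_mod_tendsto (gm_T G)"
  unfolding Q_mod_tendsto_def
proof (intro allI impI ballI)
  fix h u assume r: "reachable (gm_T G) i h" and u: "u \<in> gm_U G (gm_T G) i"
  have t: "gm_T G \<in> {1..gm_T G}" using T by auto
  have "Q_cond G (g_mod n) i (gm_T G) h u = Q_cond G (gs (\<phi> n)) i (gm_T G) h u" for n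
    using Q_cond_last[OF factorizes[OF valid_g_mod] T Pr_hist_action_pos[OF fully_mixed_g_mod t r u]]
      Q_cond_last[OF factorizes[OF valid_gs] T Pr_hist_action_pos[OF fully_mixed_gs t r u]]
      given_K_g_mod(1)[OF T order.refl] by simp
  then show "(\<lambda>n. Q_cond G (g_mod n) i (gm_T G) h u) \<longlonglongrightarrow> Q i (gm_T G) h u"
    using Q_cond_tendsto[OF t r u] by simp
qed

lemma continuation_g_mod:
  assumes t: "1 \<le> \<tau>" "\<tau> < gm_T G" and IH: "Q_mod_tendsto (Suc \<tau>)"
    and r: "reachable \<tau> i h" and z: "gm_act G \<tau> i z = u" and u: "u \<in> gm_U G \<tau> i"
  shows "(\<forall>n. obs_given_K G (gs (\<phi> n)) \<iota>1 \<iota> i \<tau> (compress \<iota>1 \<iota> i h) z = 0) \<or>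
    (\<lambda>n. value_cond G (g_mod n) i (Suc \<tau>) (snoc_hist h z) -
         value_cond G (gs (\<phi> n)) i (Suc \<tau>) (snoc_hist h z)) \<longlonglongrightarrow> 0"
proof (cases "reachable (Suc \<tau>) i (snoc_hist h z)")
  case True
  have t2: "Suc \<tau> \<in> {1..gm_T G}" using t by auto
  have "(\<lambda>n. value_cond G (g_mod n) i (Suc \<tau>) (snoc_hist h z) - value_cond G (gs (\<phi> n)) i (Suc \<tau>) (snoc_hist h z))
      \<longlonglongrightarrow> pmf_avg (\<rho> (Suc \<tau>) (compress \<iota>1 \<iota> i (snoc_hist h z))) (Q i (Suc \<tau>) (snoc_hist h z)) -
        pmf_avg (g i (Suc \<tau>) (snoc_hist h z)) (Q i (Suc \<tau>) (snoc_hist h z))"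
    using IH True unfolding Q_mod_tendsto_def
    by (intro tendsto_diff value_cond_g_mod_tendsto[OF t2] value_cond_tendsto[OF t2]) auto
  moreover have "pmf_avg (\<rho> (Suc \<tau>) (compress \<iota>1 \<iota> i (snoc_hist h z))) (Q i (Suc \<tau>) (snoc_hist h z)) =
      pmf_avg (g i (Suc \<tau>) (snoc_hist h z)) (Q i (Suc \<tau>) (snoc_hist h z))"
    using reachable_wf_hist[OF True] set_rho_optimal[OF t2 True Q_compressible[OF t2]]
    by (intro pmf_avg_optimal[OF t2]) auto
  ultimately show ?thesis by simp
next
  case False
  then show ?thesis using obs_given_K_unreachable[OF t r] z u by auto
qed

lemma Q_mod_tendsto_step:
  assumes t: "1 \<le> \<tau>" "\<tau> < gm_T G" and IH: "Q_mod_tendsto (Suc \<tau>)"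
  shows "Q_mod_tendsto \<tau>"
  unfolding Q_mod_tendsto_def
proof (intro allI impI ballI)
  fix h u assume r: "reachable \<tau> i h" and u: "u \<in> gm_U G \<tau> i"
  have t1: "\<tau> \<in> {1..gm_T G}" using t by auto
  let ?k = "compress \<iota>1 \<iota> i h" and ?Z = "{z. gm_act G \<tau> i z = u}"
  let ?V = "\<lambda>n z. value_cond G (gs (\<phi> n)) i (Suc \<tau>) (snoc_hist h z)"
  let ?V' = "\<lambda>n z. value_cond G (g_mod n) i (Suc \<tau>) (snoc_hist h z)"
  have "(\<lambda>n. \<Sum>z\<in>?Z. obs_given_K G (gs (\<phi> n)) \<iota>1 \<iota> i \<tau> ?k z * (?V' n z - ?V n z)) \<longlonglongrightarrow> 0"
    using continuation_g_mod[OF t IH r _ u]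
    by (intro sum_weighted_tendsto_zero[OF finite obs_given_K_bound]) simp
  moreover have "Q_cond G (g_mod n) i \<tau> h u - Q_cond G (gs (\<phi> n)) i \<tau> h u =
      (\<Sum>z\<in>?Z. obs_given_K G (gs (\<phi> n)) \<iota>1 \<iota> i \<tau> ?k z * (?V' n z - ?V n z))" for n
    using Q_cond_Bellman[OF wf valid_g_mod factorizes[OF valid_g_mod] t Pr_hist_action_pos[OF fully_mixed_g_mod t1 r u]]
      Q_cond_Bellman[OF wf valid_gs factorizes[OF valid_gs] t Pr_hist_action_pos[OF fully_mixed_gs t1 r u]]
    unfolding given_K_g_mod[OF t(1) less_imp_le[OF t(2)]] by (simp add: sum_subtractf right_diff_distrib)
  ultimately have "(\<lambda>n. Q_cond G (g_mod n) i \<tau> h u - Q_cond G (gs (\<phi> n)) i \<tau> h u) \<longlonglongrightarrow> 0" by simp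
  from tendsto_add[OF this Q_cond_tendsto[OF t1 r u]]
  show "(\<lambda>n. Q_cond G (g_mod n) i \<tau> h u) \<longlonglongrightarrow> Q i \<tau> h u" by simp
qed

lemma Q_mod_tendsto:
  assumes "\<tau> \<in> {1..gm_T G}"
  shows "Q_mod_tendsto \<tau>"
proof -
  have "\<tau> \<le> gm_T G" "1 \<le> \<tau>" using assms by auto
  then show ?thesis
  proof (induction \<tau> rule: inc_induct)
    case base then show ?case using Q_mod_tendsto_last by simp
  next
    case (step m) then show ?case using Q_mod_tendsto_step by simp
  qed
qed

end

section \<open>The \<open>K\<^sup>i\<close>-based profile is a sequential equilibrium\<close>

context SE_approximation
begin

definition Q_lim :: "'i \<Rightarrow> nat \<Rightarrow> ('h,'z) hist \<Rightarrow> 'u \<Rightarrow> real" where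
  "Q_lim j \<tau> h u = (if reachable \<tau> j h then Q j \<tau> h u else 0)"

lemma Q_cond_g_mod_tendsto:
  assumes t: "\<tau> \<in> {1..gm_T G}" and u: "u \<in> gm_U G \<tau> j"
  shows "(\<lambda>n. Q_cond G (g_mod n) j \<tau> h u) \<longlonglongrightarrow> Q_lim j \<tau> h u"
proof (cases "reachable \<tau> j h")
  case False
  then show ?thesis using Q_cond_unreachable[OF fully_mixed_g_mod t False] by (simp add: Q_lim_def)
next
  case r: True
  show ?thesis
  proof (cases "j = i")
    case True
    then have "(\<lambda>n. Q_cond G (g_mod n) j \<tau> h u) \<longlonglongrightarrow> Q j \<tau> h u"
      using Q_mod_tendsto[OF t] r u unfolding Q_mod_tendsto_def by blast
    then show ?thesis using r by (simp add: Q_lim_def)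
  next
    case False
    have "Q_cond G (g_mod n) j \<tau> h u = Q_cond G (gs (\<phi> n)) j \<tau> h u" for n
      unfolding K_modify_def
      by (rule Q_cond_other[OF factorizes[OF valid_gs] cond_action_consistent wf valid_gs _ False])
         (use valid_g_mod[of n] t in \<open>auto simp: K_modify_def\<close>)
    then show ?thesis using Q_cond_tendsto[OF t r u] r by (simp add: Q_lim_def)
  qed
qed

lemma seq_rational_K_based: "seq_rational G (g(i := Kbased \<iota>1 \<iota> i \<rho>)) Q_lim"
  unfolding seq_rational_def
proof (intro allI ballI impI)
  fix j t and h :: "('h,'z) hist" assume t: "t \<in> {1..gm_T G}" and w: "wf_hist t h"
  let ?opt = "\<lambda>f. {u \<in> gm_U G t j. \<forall>u'\<in>gm_U G t j. f u' \<le> (f u :: real)}"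
  have set_g': "set_pmf ((g(i := Kbased \<iota>1 \<iota> i \<rho>)) j t h) =
      (if j = i then set_pmf (\<rho> t (compress \<iota>1 \<iota> i h)) else set_pmf (g j t h))"
    by (simp add: Kbased_def)
  show "set_pmf ((g(i := Kbased \<iota>1 \<iota> i \<rho>)) j t h) \<subseteq> ?opt (Q_lim j t h)"
  proof (cases "reachable t j h")
    case r: True
    then have "?opt (Q_lim j t h) = ?opt (Q j t h)" by (simp add: Q_lim_def)
    moreover have "set_pmf (\<rho> t (compress \<iota>1 \<iota> i h)) \<subseteq> ?opt (Q j t h)" if "j = i"
      using set_rho_optimal[OF t _ Q_compressible[OF t]] r that by blast
    moreover have "set_pmf (g j t h) \<subseteq> ?opt (Q j t h)"
      using seq_rational t w unfolding seq_rational_def by blast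
    ultimately show ?thesis unfolding set_g' by auto
  next
    case False
    then have "?opt (Q_lim j t h) = gm_U G t j" by (simp add: Q_lim_def)
    then show ?thesis
      unfolding set_g' using set_rho[OF t] valid_profile_action[OF valid_g t w] by auto
  qed
qed

lemma fully_consistent_K_based: "fully_consistent G (g(i := Kbased \<iota>1 \<iota> i \<rho>)) Q_lim"
  unfolding fully_consistent_def
proof (intro exI[of _ g_mod] exI[of _ "\<lambda>n. Q_cond G (g_mod n)"] conjI allI ballI impI)
  fix n
  show "fully_mixed G (g_mod n)" by (rule fully_mixed_g_mod)
  show "Q_of G (g_mod n) (Q_cond G (g_mod n))" unfolding Q_of_def Q_cond_def by blast
next
  fix j t u and h :: "('h,'z) hist" assume t: "t \<in> {1..gm_T G}" and w: "wf_hist t h"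
  show "(\<lambda>n. pmf (g_mod n j t h) u) \<longlonglongrightarrow> pmf ((g(i := Kbased \<iota>1 \<iota> i \<rho>)) j t h) u"
    using cond_action_tendsto[OF t] gs_subseq_tendsto[OF t w] by (simp add: K_modify_def Kbased_def)
  show "u \<in> gm_U G t j \<Longrightarrow> (\<lambda>n. Q_cond G (g_mod n) j t h u) \<longlonglongrightarrow> Q_lim j t h u"
    by (rule Q_cond_g_mod_tendsto[OF t])
qed

lemma is_SE_K_based: "is_SE G (g(i := Kbased \<iota>1 \<iota> i \<rho>)) Q_lim"
  unfolding is_SE_def using seq_rational_K_based fully_consistent_K_based by blast

lemma J_K_based_rho: "J G (g(i := Kbased \<iota>1 \<iota> i \<rho>)) j = J G g j"
  by (rule J_K_based[OF factorizes[OF valid_g] rho_consistent])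

end

theorem lemma11:
  fixes G :: "('i::finite, 'x::finite, 'u::finite, 'z::finite, 'w::finite, 'h::finite) game"
    and \<iota>1 :: "'i \<Rightarrow> 'h \<Rightarrow> 'k::finite"
    and \<iota> :: "nat \<Rightarrow> 'i \<Rightarrow> 'k \<Rightarrow> 'z \<Rightarrow> 'k"
    and i :: 'i
    and g :: "('i,'h,'z,'u) profile"
    and Q :: "'i \<Rightarrow> nat \<Rightarrow> ('h,'z) hist \<Rightarrow> 'u \<Rightarrow> real"
  assumes "wf_game G"
    and "USI G \<iota>1 \<iota> i"
    and "is_SE G g Q"
  shows "\<exists>\<rho> :: nat \<Rightarrow> 'k \<Rightarrow> 'u pmf.
           (\<forall>t\<in>{1..gm_T G}. \<forall>k. set_pmf (\<rho> t k) \<subseteq> gm_U G t i) \<and>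
           (\<exists>Q'. is_SE G (g(i := Kbased \<iota>1 \<iota> i \<rho>)) Q') \<and>
           (\<forall>j. J G (g(i := Kbased \<iota>1 \<iota> i \<rho>)) j = J G g j)"
proof -
  obtain gs Qs where gs: "\<forall>n. fully_mixed G (gs n) \<and> Q_of G (gs n) (Qs n)"
    and tendsto: "\<forall>j. \<forall>t\<in>{1..gm_T G}. \<forall>h u. wf_hist t h \<longrightarrow> (\<lambda>n. pmf (gs n j t h) u) \<longlonglongrightarrow> pmf (g j t h) u \<and>
      (u \<in> gm_U G t j \<longrightarrow> (\<lambda>n. Qs n j t h u) \<longlonglongrightarrow> Q j t h u)"
    using assms(3) unfolding is_SE_def fully_consistent_def by blast
  obtain \<phi> \<rho>' where \<phi>: "strict_mono \<phi>" and \<rho>': "\<forall>tk\<in>{1..gm_T G} \<times> UNIV. \<forall>a.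
      (\<lambda>n. pmf (cond_action G \<iota>1 \<iota> i (gs (\<phi> n)) (fst tk) (snd tk)) a) \<longlonglongrightarrow> pmf (\<rho>' tk) a"
    using convergent_subseq_pmfs[of "{1..gm_T G} \<times> UNIV" "\<lambda>n tk. cond_action G \<iota>1 \<iota> i (gs n) (fst tk) (snd tk)"] by auto
  interpret SE_approximation G \<iota>1 \<iota> i g Q gs Qs \<phi> "\<lambda>t k. \<rho>' (t, k)"
    using assms(1) USI_imp_state_factorizes[OF assms(2)] gs tendsto \<phi> \<rho>' assms(3)
    by unfold_locales (auto simp: is_SE_def)
  show ?thesis
    using set_rho is_SE_K_based J_K_based_rho by (intro exI[of _ "\<lambda>t k. \<rho>' (t, k)"]) blast
qed

end
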